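(* Fix $\Theta\in\Omega$ with $\mu$, $(Y_i)_{i\ge0}$ as in the setup. Almost surely there exists $L_0\in\mathbb R^+$ such that for every $l\ge L_0$ and every $i\in\mathbb N$ with $Y_i\ge l$, $$\mu(Y_i,Y_{i+1}]\le\frac{\log^2 l}{l}.$$
   Context: Let $\Omega$ be the set of sequences $\Theta=(\theta_i)_{i\ge 0}$ of nonnegative reals with $\sum_{i\ge0}\theta_i^2=1$, $\theta_1\ge\theta_2\ge\cdots$, and either $\theta_0\ne0$ or $\sum_{i\ge1}\theta_i=\infty$. For $\Theta\in\Omega$, let $(X_i)_{i\ge1}$ be independent exponential random variables with respective rates $\theta_i$ (a rate-$0$ variable equals $+\infty$), and let $\mu:=\theta_0^2\,dx+\sum_{i\ge1}\theta_i\delta_{X_i}$, a random measure on $\mathbb R^+$ (a.s. $\mu[0,l]<\infty$ for all $l$). Conditionally on $\mu$, let $Y_1<Y_2<\cdots$ be the points of a Poisson point process on $\mathbb R^+$ with intensity $\mu[0,l]\,dl$ (the "cuts"), and set $Y_0:=0$. *)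

theory Defs
  imports "HOL-Probability.Probability"
begin

text \<open>The parameter set Omega: theta 0 is the diffuse part, theta 1, theta 2, ... the atoms.\<close>
definition Omega_param :: "(nat \<Rightarrow> real) \<Rightarrow> bool" where
  "Omega_param \<theta> \<longleftrightarrow>
     (\<forall>i. 0 \<le> \<theta> i) \<and> ((\<lambda>i. (\<theta> i)\<^sup>2) sums 1) \<and>
     (\<forall>i\<ge>1. \<theta> (Suc i) \<le> \<theta> i) \<and>
     (\<theta> 0 \<noteq> 0 \<or> \<not> summable (\<lambda>i. \<theta> (Suc i)))"

text \<open>mu(a,b] = theta0^2 (b-a) + sum over i>=1 of theta_i [a < X_i <= b] (for a <= b).
  Atoms with rate theta_i = 0 (X_i = +infinity) carry weight 0, so the value of X_i is irrelevant then.\<close>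
definition mu_Ioc :: "(nat \<Rightarrow> real) \<Rightarrow> (nat \<Rightarrow> real) \<Rightarrow> real \<Rightarrow> real \<Rightarrow> ennreal" where
  "mu_Ioc \<theta> x a b =
     ennreal ((\<theta> 0)\<^sup>2 * (b - a)) +
     (\<Sum>i. ennreal (\<theta> (Suc i) * indicator {a<..b} (x (Suc i))))"

definition mu_Icc0 :: "(nat \<Rightarrow> real) \<Rightarrow> (nat \<Rightarrow> real) \<Rightarrow> real \<Rightarrow> ennreal" where
  "mu_Icc0 \<theta> x l =
     ennreal ((\<theta> 0)\<^sup>2 * l) +
     (\<Sum>i. ennreal (\<theta> (Suc i) * indicator {0..l} (x (Suc i))))"

definition cum_intensity :: "(nat \<Rightarrow> real) \<Rightarrow> (nat \<Rightarrow> real) \<Rightarrow> real \<Rightarrow> ennreal" where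
  "cum_intensity \<theta> x l = (\<integral>\<^sup>+ s. mu_Icc0 \<theta> x s * indicator {0..l} s \<partial>lborel)"

text \<open>The cuts, by time change of a unit-rate Poisson process with inter-arrival times e 0, e 1, ...:
  Y 0 = 0 and Y k = inf { l >= 0 : Lambda(l) >= e 0 + ... + e (k-1) } for k >= 1.\<close>
definition cuts :: "(nat \<Rightarrow> real) \<Rightarrow> (nat \<Rightarrow> real) \<Rightarrow> (nat \<Rightarrow> real) \<Rightarrow> nat \<Rightarrow> real" where
  "cuts \<theta> x e k =
     (if k = 0 then 0
      else Inf {l. 0 \<le> l \<and> ennreal (\<Sum>j<k. e j) \<le> cum_intensity \<theta> x l})"

end

theory Submission
  imports Defs
begin

text \<open>
  Between \<open>Y i\<close> and \<open>Y (i + 1)\<close> the cumulative intensity \<open>Lam\<close> of the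
  cuts grows by the inter-arrival time \<open>e i\<close>, and it grows at rate at least \<open>\<mu>[0, Y i]\<close>;
  hence \<open>(Y (i + 1) - Y i) \<mu>[0, Y i] \<le> e i\<close>. By Borel-Cantelli, almost surely eventually
  \<open>e i \<le> 2 log i\<close>, \<open>e 0 + ... + e (i - 1) \<ge> i / 20\<close> and the atoms in \<open>[0, n]\<close> weigh less
  than \<open>n\<^sup>3\<close>; since \<open>Lam l \<le> l \<mu>[0, l]\<close>, this gives \<open>e i \<le> 9 log (Y i)\<close> for large cuts, so
  the diffuse part of \<open>\<mu>(Y i, Y (i + 1)]\<close> is at most \<open>9 log (Y i) / Y i\<close>. For the atoms,
  split the half-line into blocks \<open>[e^k, e^(k+1))\<close>. Chernoff bounds for the independent
  exponential positions show that almost surely, for all large \<open>k\<close>, the atoms in \<open>[0, e^k]\<close>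
  carry mass at least a multiple of \<open>m(e^k) / k\<close>, where \<open>m\<close> is their mean mass, so that cut
  intervals starting in the block are short, while every short window in the block carries
  little atomic mass. Altogether \<open>\<mu>(Y i, Y (i + 1)] \<le> (k + 1)\<^sup>2 / e^(k+1) \<le> log\<^sup>2 l / l\<close>.
\<close>

lemma one_minus_exp_neg_le: "1 - exp (- z) \<le> (z::real)"
  using exp_ge_add_one_self[of "- z"] by simp

lemma half_le_one_minus_exp_neg:
  fixes z :: real
  assumes "0 \<le> z" "z \<le> 1"
  shows "z / 2 \<le> 1 - exp (- z)"
proof -
  have "exp (- z) \<le> 1 / (1 + z)"
    using exp_ge_add_one_self[of z] assms by (simp add: exp_minus divide_simps)
  also have "1 / (1 + z) \<le> 1 - z / 2"
    using assms mult_left_le_one_le[of z z] by (simp add: divide_simps algebra_simps)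
  finally show ?thesis by simp
qed

lemma ln_sq_div_antimono:
  fixes y z :: real
  assumes "exp 2 \<le> y" "y \<le> z"
  shows "(ln z)\<^sup>2 / z \<le> (ln y)\<^sup>2 / y"
proof (rule DERIV_nonpos_imp_nonincreasing[OF assms(2)])
  fix t assume t: "y \<le> t" "t \<le> z"
  have t_pos: "0 < t" using t assms(1) exp_gt_zero[of 2] by linarith
  have ln_t: "2 \<le> ln t" using t assms(1) t_pos by (metis ln_exp ln_le_cancel_iff exp_gt_zero order_trans)
  have "((\<lambda>t. (ln t)\<^sup>2 / t) has_real_derivative ln t * (2 - ln t) / t\<^sup>2) (at t)"
    using t_pos by (auto intro!: derivative_eq_intros simp: power2_eq_square algebra_simps)
  moreover have "ln t * (2 - ln t) / t\<^sup>2 \<le> 0"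
    using ln_t by (intro divide_nonpos_nonneg mult_nonneg_nonpos) auto
  ultimately show "\<exists>d. ((\<lambda>t. (ln t)\<^sup>2 / t) has_real_derivative d) (at t) \<and> d \<le> 0" by blast
qed

lemma two_ln_le_nine_ln:
  fixes a :: real and n :: nat
  assumes a: "exp 100 \<le> a" and n: "1 \<le> n" "real n \<le> 40 * (a + 2) ^ 4"
  shows "2 * ln (real n) \<le> 9 * ln a"
proof -
  have a_pos: "2 \<le> a" using a exp_ge_add_one_self[of 100] by linarith
  have ln_a: "100 \<le> ln a" using a ln_mono[of "exp 100" a] by simp
  have "ln (real n) \<le> ln (40 * (a + 2) ^ 4)" using n a_pos by (intro ln_mono) auto
  also have "\<dots> = ln 40 + 4 * ln (a + 2)" using a_pos by (simp add: ln_mult ln_realpow)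
  also have "\<dots> \<le> 39 + 4 * (1 + ln a)"
  proof -
    have "ln (a + 2) \<le> ln (2 * a)" using a_pos by (intro ln_mono) auto
    also have "\<dots> \<le> 1 + ln a" using a_pos ln_le_minus_one[of 2] by (simp add: ln_mult)
    finally show ?thesis using ln_le_minus_one[of 40] by simp
  qed
  finally show ?thesis using ln_a by simp
qed

section \<open>The atomic part of \<open>\<mu>\<close>\<close>

definition atom_mass :: "(nat \<Rightarrow> real) \<Rightarrow> (nat \<Rightarrow> real) \<Rightarrow> real set \<Rightarrow> ennreal" where
  "atom_mass \<theta> x W = (\<Sum>i. ennreal (\<theta> (Suc i) * indicator W (x (Suc i))))"

text \<open>The expected mass of the atoms in \<open>[0, l]\<close>, as \<open>X i \<le> l\<close> has probability
  \<open>1 - exp (- l * \<theta> i)\<close>.\<close>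

definition mean_atom_mass :: "(nat \<Rightarrow> real) \<Rightarrow> real \<Rightarrow> real" where
  "mean_atom_mass \<theta> l = (\<Sum>i. \<theta> (Suc i) * (1 - exp (- l * \<theta> (Suc i))))"

lemma mu_Ioc_eq_atom_mass: "mu_Ioc \<theta> x a b = ennreal ((\<theta> 0)\<^sup>2 * (b - a)) + atom_mass \<theta> x {a<..b}"
  by (simp add: mu_Ioc_def atom_mass_def)

lemma mu_Icc0_eq_atom_mass: "mu_Icc0 \<theta> x l = ennreal ((\<theta> 0)\<^sup>2 * l) + atom_mass \<theta> x {0..l}"
  by (simp add: mu_Icc0_def atom_mass_def)

lemma atom_mass_ge_first_atom: "x 1 \<in> W \<Longrightarrow> ennreal (\<theta> 1) \<le> atom_mass \<theta> x W"
  unfolding atom_mass_def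
  using sum_le_suminf[of "\<lambda>i. ennreal (\<theta> (Suc i) * indicator W (x (Suc i)))" "{0}"]
  by (simp add: summableI)

locale omega_parameters =
  fixes \<theta> :: "nat \<Rightarrow> real"
  assumes Omega: "Omega_param \<theta>"
begin

lemma theta_nonneg: "0 \<le> \<theta> i"
  using Omega by (simp add: Omega_param_def)

lemma theta_antimono:
  assumes "1 \<le> i" "i \<le> j"
  shows "\<theta> j \<le> \<theta> i"
  using assms(2)
proof (induction j rule: dec_induct)
  case (step n)
  have "\<theta> (Suc n) \<le> \<theta> n" using Omega assms(1) step.hyps(1) by (simp add: Omega_param_def)
  with step.IH show ?case by linarith
qed simp

lemma atoms_vanish: "\<theta> 1 = 0 \<Longrightarrow> \<theta> (Suc i) = 0"
  using theta_antimono[of 1 "Suc i"] theta_nonneg[of "Suc i"] by simp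

lemma diffuse_nonzero_if_no_atoms: "\<theta> 1 = 0 \<Longrightarrow> \<theta> 0 \<noteq> 0"
  using Omega atoms_vanish by (auto simp: Omega_param_def)

lemma atom_sq_summable: "summable (\<lambda>i. (\<theta> (Suc i))\<^sup>2)"
  using Omega summable_Suc_iff[of "\<lambda>i. (\<theta> i)\<^sup>2"] by (auto simp: Omega_param_def sums_iff)

lemma diffuse_sq_plus_atom_sq: "(\<theta> 0)\<^sup>2 + (\<Sum>i. (\<theta> (Suc i))\<^sup>2) = 1"
  using Omega suminf_split_head[of "\<lambda>i. (\<theta> i)\<^sup>2"]
  by (auto simp: Omega_param_def sums_iff)

lemma atom_sq_suminf_le_1: "(\<Sum>i. (\<theta> (Suc i))\<^sup>2) \<le> 1"
  using diffuse_sq_plus_atom_sq zero_le_power2[of "\<theta> 0"] by linarith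

lemma diffuse_sq_le_1: "(\<theta> 0)\<^sup>2 \<le> 1"
  using diffuse_sq_plus_atom_sq suminf_nonneg[OF atom_sq_summable] by force

lemma atom_mass_eq_SUP:
  "atom_mass \<theta> x W = (SUP n. ennreal (\<Sum>i\<in>{1..n}. \<theta> i * indicator W (x i)))"
  unfolding atom_mass_def suminf_eq_SUP
  using theta_nonneg by (simp add: sum_ennreal sum.atLeast1_atMost_eq)

lemma atom_mass_mono: "W \<subseteq> V \<Longrightarrow> atom_mass \<theta> x W \<le> atom_mass \<theta> x V"
  unfolding atom_mass_def using theta_nonneg
  by (intro suminf_le) (auto intro!: ennreal_leI mult_left_mono split: split_indicator)

lemma atom_mass_no_atoms: "\<theta> 1 = 0 \<Longrightarrow> atom_mass \<theta> x W = 0"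
  by (simp add: atom_mass_def atoms_vanish)

lemma mean_term_nonneg: "0 \<le> l \<Longrightarrow> 0 \<le> \<theta> i * (1 - exp (- l * \<theta> i))"
  using theta_nonneg[of i] by simp

lemma mean_term_le: "0 \<le> l \<Longrightarrow> \<theta> i * (1 - exp (- l * \<theta> i)) \<le> l * (\<theta> i)\<^sup>2"
  using theta_nonneg[of i] one_minus_exp_neg_le[of "l * \<theta> i"] mult_left_mono
  by (fastforce simp: power2_eq_square mult_ac)

lemma mean_atom_mass_summable:
  "0 \<le> l \<Longrightarrow> summable (\<lambda>i. \<theta> (Suc i) * (1 - exp (- l * \<theta> (Suc i))))"
  by (rule summable_comparison_test'[where g="\<lambda>i. l * (\<theta> (Suc i))\<^sup>2"])
     (use mean_term_le mean_term_nonneg atom_sq_summable in \<open>auto intro: summable_mult\<close>)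

lemma mean_atom_mass_nonneg: "0 \<le> l \<Longrightarrow> 0 \<le> mean_atom_mass \<theta> l"
  unfolding mean_atom_mass_def by (intro suminf_nonneg mean_atom_mass_summable mean_term_nonneg)

lemma mean_atom_mass_le: "0 \<le> l \<Longrightarrow> mean_atom_mass \<theta> l \<le> l"
proof -
  assume l: "0 \<le> l"
  have "mean_atom_mass \<theta> l \<le> (\<Sum>i. l * (\<theta> (Suc i))\<^sup>2)"
    unfolding mean_atom_mass_def using l
    by (intro suminf_le mean_term_le mean_atom_mass_summable summable_mult atom_sq_summable)
  also have "\<dots> = l * (\<Sum>i. (\<theta> (Suc i))\<^sup>2)"
    by (rule suminf_mult[OF atom_sq_summable])
  also have "\<dots> \<le> l" using l atom_sq_suminf_le_1 by (simp add: mult_left_le)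
  finally show ?thesis .
qed

lemma mean_atom_mass_ge_partial_sum:
  "0 \<le> l \<Longrightarrow> (\<Sum>i\<in>{1..n}. \<theta> i * (1 - exp (- l * \<theta> i))) \<le> mean_atom_mass \<theta> l"
  unfolding mean_atom_mass_def
  using sum_le_suminf[OF mean_atom_mass_summable, of l "{..<n}"] mean_term_nonneg
  by (simp add: sum.atLeast1_atMost_eq)

lemma mean_atom_mass_pos: "0 < \<theta> 1 \<Longrightarrow> 0 < l \<Longrightarrow> 0 < mean_atom_mass \<theta> l"
  unfolding mean_atom_mass_def
  using mean_atom_mass_summable[of l] mean_term_nonneg[of l]
  by (intro suminf_pos2[of _ 0]) auto

end

section \<open>Cuts of a fixed realisation\<close>

lemma indicator_Icc_measurable [measurable]:
  "(\<lambda>l::real. indicator {0..l} c :: real) \<in> borel_measurable borel"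
proof -
  have "(\<lambda>l::real. indicator {0..l} c :: real) = (\<lambda>l. if 0 \<le> c \<and> c \<le> l then 1 else 0)"
    by (auto simp: fun_eq_iff split: split_indicator)
  then show ?thesis by simp
qed

lemma mu_Icc0_measurable [measurable]: "mu_Icc0 \<theta> x \<in> borel_measurable borel"
  unfolding mu_Icc0_def[abs_def] by measurable

locale cut_sequence = omega_parameters +
  fixes x e :: "nat \<Rightarrow> real"
  assumes arrival_nonneg: "0 \<le> e j"
    and first_atom_nonneg: "0 < \<theta> 1 \<Longrightarrow> 0 \<le> x 1"
begin

abbreviation "mu \<equiv> mu_Icc0 \<theta> x"
abbreviation "Lam \<equiv> cum_intensity \<theta> x"
abbreviation "Y \<equiv> cuts \<theta> x e"

lemma mu_mono: "l \<le> l' \<Longrightarrow> mu l \<le> mu l'"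
  unfolding mu_Icc0_eq_atom_mass
  by (intro add_mono ennreal_leI mult_left_mono atom_mass_mono) auto

lemma diffuse_le_mu: "ennreal ((\<theta> 0)\<^sup>2 * l) \<le> mu l"
  unfolding mu_Icc0_eq_atom_mass by simp

lemma atom_mass_le_mu: "atom_mass \<theta> x {0..l} \<le> mu l"
  unfolding mu_Icc0_eq_atom_mass by simp

lemma mu_pos: "\<exists>t\<ge>0. \<exists>c>0. ennreal c \<le> mu t"
proof (cases "0 < \<theta> 1")
  case True
  then have "ennreal (\<theta> 1) \<le> mu (x 1)"
    using first_atom_nonneg atom_mass_ge_first_atom[of x "{0..x 1}"] atom_mass_le_mu order_trans
    by fastforce
  then show ?thesis using True first_atom_nonneg by blast
next
  case False
  then have "0 < (\<theta> 0)\<^sup>2 * 1"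
    using diffuse_nonzero_if_no_atoms theta_nonneg[of 1] by simp
  then show ?thesis using diffuse_le_mu[of 1] zero_le_one by blast
qed

lemma Lam_mono: "l \<le> l' \<Longrightarrow> Lam l \<le> Lam l'"
  unfolding cum_intensity_def
  by (intro nn_integral_mono mult_left_mono) (auto split: split_indicator)

lemma Lam_increment:
  assumes "0 \<le> t" "t \<le> s"
  shows "Lam t + ennreal (s - t) * mu t \<le> Lam s"
proof -
  have "Lam s = (\<integral>\<^sup>+u. mu u * indicator {0..t} u + mu u * indicator {t<..s} u \<partial>lborel)"
    unfolding cum_intensity_def using assms
    by (intro nn_integral_cong) (auto split: split_indicator)
  also have "\<dots> = Lam t + (\<integral>\<^sup>+u. mu u * indicator {t<..s} u \<partial>lborel)"
    unfolding cum_intensity_def by (rule nn_integral_add) measurable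
  finally have split: "Lam s = Lam t + (\<integral>\<^sup>+u. mu u * indicator {t<..s} u \<partial>lborel)" .
  have "ennreal (s - t) * mu t = (\<integral>\<^sup>+u. mu t * indicator {t<..s} u \<partial>lborel)"
    using assms by (simp add: nn_integral_cmult_indicator mult.commute)
  also have "\<dots> \<le> (\<integral>\<^sup>+u. mu u * indicator {t<..s} u \<partial>lborel)"
    by (intro nn_integral_mono) (auto split: split_indicator intro: mu_mono)
  finally show ?thesis unfolding split by (rule add_left_mono)
qed

lemma Lam_le:
  assumes "0 \<le> l"
  shows "Lam l \<le> ennreal l * mu l"
proof -
  have "Lam l \<le> (\<integral>\<^sup>+u. mu l * indicator {0..l} u \<partial>lborel)"
    unfolding cum_intensity_def
    by (intro nn_integral_mono) (auto split: split_indicator intro: mu_mono)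
  also have "\<dots> = ennreal l * mu l"
    using assms by (simp add: nn_integral_cmult_indicator mult.commute)
  finally show ?thesis .
qed

lemma Lam_unbounded: "\<exists>l\<ge>0. ennreal c \<le> Lam l"
proof -
  obtain t c0 where t: "0 \<le> t" and c0: "0 < c0" "ennreal c0 \<le> mu t"
    using mu_pos by blast
  define r where "r = max c 0 / c0"
  have r: "0 \<le> r" using c0 by (simp add: r_def)
  have "ennreal c \<le> ennreal r * ennreal c0"
    using c0 by (simp add: r_def flip: ennreal_mult)
  also have "\<dots> \<le> ennreal (t + r - t) * mu t"
    using c0 by (simp add: mult_left_mono)
  also have "\<dots> \<le> Lam t + ennreal (t + r - t) * mu t"
    by (rule add_increasing) simp_all
  also have "\<dots> \<le> Lam (t + r)"
    using Lam_increment[of t "t + r"] t r by simp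
  finally show ?thesis using t r by (intro exI[of _ "t + r"]) auto
qed

definition hitting_set :: "nat \<Rightarrow> real set" where
  "hitting_set k = {l. 0 \<le> l \<and> ennreal (\<Sum>j<k. e j) \<le> Lam l}"

lemma hitting_set_nonempty: "hitting_set k \<noteq> {}"
  using Lam_unbounded[of "\<Sum>j<k. e j"] unfolding hitting_set_def by auto

lemma hitting_set_bdd_below: "bdd_below (hitting_set k)"
  unfolding hitting_set_def by (intro bdd_belowI[of _ 0]) auto

lemma cuts_eq_Inf: "k \<noteq> 0 \<Longrightarrow> Y k = Inf (hitting_set k)"
  unfolding cuts_def hitting_set_def by simp

lemma cuts_nonneg: "0 \<le> Y k"
  using hitting_set_nonempty[of k]
  by (cases "k = 0") (auto simp: cuts_eq_Inf cuts_def hitting_set_def intro: cInf_greatest)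

lemma Lam_ge_of_cuts_less: "Y k < t \<Longrightarrow> ennreal (\<Sum>j<k. e j) \<le> Lam t"
proof (cases "k = 0")
  case False
  assume "Y k < t"
  then obtain l where "l \<in> hitting_set k" "l < t"
    using False cInf_lessD[OF hitting_set_nonempty] by (auto simp: cuts_eq_Inf)
  then show ?thesis
    using Lam_mono[of l t] by (auto simp: hitting_set_def)
qed simp

lemma Lam_less_of_less_cuts:
  assumes "0 \<le> s" "s < Y k"
  shows "Lam s < ennreal (\<Sum>j<k. e j)"
proof (rule ccontr)
  assume "\<not> ?thesis"
  then have "s \<in> hitting_set k" using assms by (simp add: hitting_set_def not_less)
  then have "Inf (hitting_set k) \<le> s" by (rule cInf_lower[OF _ hitting_set_bdd_below])
  then show False using assms by (cases "k = 0") (auto simp: cuts_eq_Inf cuts_def hitting_set_def)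
qed

lemma cuts_gap_mult_le:
  assumes c: "0 \<le> c" "ennreal c \<le> mu (Y i)"
  shows "(Y (Suc i) - Y i) * c \<le> e i"
proof -
  have strict: "(s - t) * c < e i" if st: "Y i < t" "t \<le> s" "s < Y (Suc i)" for s t
  proof -
    have t0: "0 \<le> t" using st cuts_nonneg[of i] by linarith
    have "ennreal ((\<Sum>j<i. e j) + (s - t) * c) = ennreal (\<Sum>j<i. e j) + ennreal (s - t) * ennreal c"
      using st c arrival_nonneg by (simp add: sum_nonneg ennreal_plus ennreal_mult)
    also have "\<dots> \<le> Lam t + ennreal (s - t) * mu t"
      using st c mu_mono[of "Y i" t]
      by (intro add_mono mult_left_mono Lam_ge_of_cuts_less order_trans[OF c(2)]) auto
    also have "\<dots> \<le> Lam s" using st t0 by (intro Lam_increment) auto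
    also have "\<dots> < ennreal (\<Sum>j<Suc i. e j)" using st t0 by (intro Lam_less_of_less_cuts) auto
    finally show ?thesis
      using st c arrival_nonneg by (simp add: ennreal_less_iff sum_nonneg)
  qed
  show ?thesis
  proof (cases "Y i < Y (Suc i)")
    case True
    have "((\<lambda>\<epsilon>. (Y (Suc i) - Y i - 2 * \<epsilon>) * c) \<longlongrightarrow> (Y (Suc i) - Y i - 2 * 0) * c) (at_right 0)"
      by (intro tendsto_intros)
    moreover have "(Y (Suc i) - Y i - 2 * \<epsilon>) * c \<le> e i" if "0 < \<epsilon>" "\<epsilon> < (Y (Suc i) - Y i) / 2" for \<epsilon>
      using strict[of "Y i + \<epsilon>" "Y (Suc i) - \<epsilon>"] that by (simp add: algebra_simps)
    then have "\<forall>\<^sub>F \<epsilon> in at_right 0. (Y (Suc i) - Y i - 2 * \<epsilon>) * c \<le> e i"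
      unfolding eventually_at_right_field using True
      by (intro exI[of _ "(Y (Suc i) - Y i) / 2"]) auto
    ultimately show ?thesis by (intro tendsto_upperbound) auto
  next
    case False
    then show ?thesis
      using c arrival_nonneg[of i] mult_nonpos_nonneg[of "Y (Suc i) - Y i" c] by linarith
  qed
qed

lemma diffuse_cuts_gap_le:
  assumes "0 < Y i"
  shows "(\<theta> 0)\<^sup>2 * (Y (Suc i) - Y i) \<le> e i / Y i"
proof -
  have "(Y (Suc i) - Y i) * ((\<theta> 0)\<^sup>2 * Y i) \<le> e i"
    using assms by (intro cuts_gap_mult_le diffuse_le_mu) simp
  then show ?thesis using assms by (simp add: field_simps)
qed

lemma cuts_gap_le_of_atom_mass:
  assumes "0 < L" "ennreal L \<le> atom_mass \<theta> x {0..Y i}"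
  shows "Y (Suc i) - Y i \<le> e i / L"
proof -
  have "(Y (Suc i) - Y i) * L \<le> e i"
    using assms atom_mass_le_mu by (intro cuts_gap_mult_le) (auto intro: order_trans)
  then show ?thesis using assms by (simp add: field_simps)
qed

lemma arrival_sum_le_of_cut:
  assumes a: "1 \<le> Y i" and atoms: "atom_mass \<theta> x {0..Y i + 1} \<le> ennreal ((Y i + 2) ^ 3)"
  shows "(\<Sum>j<i. e j) \<le> 2 * (Y i + 2) ^ 4"
proof -
  define a where "a = Y i"
  have "mu (a + 1) \<le> ennreal (a + 1) + ennreal ((a + 2) ^ 3)"
    unfolding mu_Icc0_eq_atom_mass a_def
    using a atoms diffuse_sq_le_1 by (intro add_mono ennreal_leI) (auto simp: mult_left_le_one_le)
  then have "Lam (a + 1) \<le> ennreal ((a + 1) * ((a + 1) + (a + 2) ^ 3))"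
    using a Lam_le[of "a + 1"] mult_left_mono[of _ _ "ennreal (a + 1)"]
    by (fastforce simp: a_def ennreal_plus ennreal_mult intro: order_trans)
  moreover have "ennreal (\<Sum>j<i. e j) \<le> Lam (a + 1)"
    by (rule Lam_ge_of_cuts_less) (simp add: a_def)
  ultimately have "ennreal (\<Sum>j<i. e j) \<le> ennreal ((a + 1) * ((a + 1) + (a + 2) ^ 3))"
    by (rule order_trans[rotated])
  then have "(\<Sum>j<i. e j) \<le> (a + 1) * ((a + 1) + (a + 2) ^ 3)"
    using a by (subst (asm) ennreal_le_iff) (auto simp: a_def)
  also have "\<dots> \<le> (a + 2) * ((a + 2) ^ 3 + (a + 2) ^ 3)"
    using a power_increasing[of 1 3 "a + 2"] by (intro mult_mono add_mono) (auto simp: a_def)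
  also have "\<dots> = 2 * (a + 2) ^ 4" by (simp add: algebra_simps power_def)
  finally show ?thesis by (simp add: a_def)
qed

lemma arrival_le_nine_ln_of_cut:
  assumes Y: "exp 100 \<le> Y i"
    and arrival: "e i \<le> 2 * ln (real i)" and arrival_sum: "real i / 20 \<le> (\<Sum>j<i. e j)"
    and atoms: "atom_mass \<theta> x {0..Y i + 1} \<le> ennreal ((Y i + 2) ^ 3)"
  shows "e i \<le> 9 * ln (Y i)"
proof -
  have "1 \<le> Y i" using Y exp_ge_add_one_self[of 100] by linarith
  then have "real i \<le> 40 * (Y i + 2) ^ 4"
    using arrival_sum_le_of_cut[OF _ atoms] arrival_sum by linarith
  moreover have "1 \<le> i"
    using Y by (cases i) (auto simp: cuts_def)
  ultimately show ?thesis
    using two_ln_le_nine_ln[OF Y] arrival by fastforce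
qed

lemma arrival_le_nine_ln_cut:
  assumes arrival: "\<forall>\<^sub>F i in sequentially. e i \<le> 2 * ln (real i)"
    and arrival_sum: "\<forall>\<^sub>F i in sequentially. real i / 20 \<le> (\<Sum>j<i. e j)"
    and growth: "\<forall>\<^sub>F n in sequentially. atom_mass \<theta> x {0..real n} < ennreal (real n ^ 3)"
  shows "\<exists>A. \<forall>i. A \<le> Y i \<longrightarrow> e i \<le> 9 * ln (Y i)"
proof -
  obtain N where N: "\<And>i. N \<le> i \<Longrightarrow> e i \<le> 2 * ln (real i) \<and> real i / 20 \<le> (\<Sum>j<i. e j)
      \<and> atom_mass \<theta> x {0..real i} < ennreal (real i ^ 3)"
    using eventually_conj[OF arrival eventually_conj[OF arrival_sum growth]]
    unfolding eventually_sequentially by blast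
  define A where "A = max (exp 100) (max (real N) (Max (Y ` {..<N}) + 1))"
  have "e i \<le> 9 * ln (Y i)" if A: "A \<le> Y i" for i
  proof -
    have i: "N \<le> i"
    proof (rule ccontr)
      assume "\<not> N \<le> i"
      then have "Y i \<le> Max (Y ` {..<N})" by (intro Max_ge) auto
      then show False using A by (simp add: A_def)
    qed
    define n where "n = nat \<lceil>Y i + 1\<rceil>"
    have n: "Y i + 1 \<le> real n" "real n \<le> Y i + 2"
      using cuts_nonneg[of i] unfolding n_def by linarith+
    moreover have "real N \<le> Y i" using A by (simp add: A_def)
    ultimately have "N \<le> n" by simp
    have "atom_mass \<theta> x {0..Y i + 1} \<le> atom_mass \<theta> x {0..real n}"
      using n by (intro atom_mass_mono) auto
    also have "\<dots> \<le> ennreal (real n ^ 3)"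
      using N[OF \<open>N \<le> n\<close>] by (simp add: less_imp_le)
    also have "\<dots> \<le> ennreal ((Y i + 2) ^ 3)"
      using n cuts_nonneg[of i] by (intro ennreal_leI power_mono) auto
    finally show ?thesis
      using A N[OF i] by (intro arrival_le_nine_ln_of_cut) (auto simp: A_def)
  qed
  then show ?thesis by blast
qed

end

text \<open>Blocks \<open>[exp k, exp (k + 1))\<close>: once the atoms in \<open>[0, exp k]\<close> carry mass at least
  \<open>block_mass_bound \<theta> k\<close>, a cut interval starting in the block has length at most
  \<open>window_width \<theta> k\<close> and so lies in one of the \<open>window_count \<theta> k + 1\<close> windows; the atoms
  in a window may then carry mass \<open>window_mass k\<close>, which together with the diffuse part
  adds up to \<open>(k + 1)\<^sup>2 / exp (k + 1)\<close>.\<close>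

definition block_mass_bound :: "(nat \<Rightarrow> real) \<Rightarrow> nat \<Rightarrow> real" where
  "block_mass_bound \<theta> k = 1000 * mean_atom_mass \<theta> (exp (real k)) / real k"

definition window_width :: "(nat \<Rightarrow> real) \<Rightarrow> nat \<Rightarrow> real" where
  "window_width \<theta> k = 9 * (real k + 1) / block_mass_bound \<theta> k"

definition window_count :: "(nat \<Rightarrow> real) \<Rightarrow> nat \<Rightarrow> nat" where
  "window_count \<theta> k = nat \<lceil>exp (real k + 1) / window_width \<theta> k\<rceil>"

definition window :: "(nat \<Rightarrow> real) \<Rightarrow> nat \<Rightarrow> nat \<Rightarrow> real set" where
  "window \<theta> k j = {exp (real k) + real j * window_width \<theta> k <..
                    exp (real k) + (real j + 2) * window_width \<theta> k}"

definition window_mass :: "nat \<Rightarrow> real" where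
  "window_mass k = (real k + 1)\<^sup>2 / exp (real k + 1) - 9 * (real k + 1) / exp (real k)"

lemma window_mass_nonneg:
  assumes "100 \<le> k"
  shows "0 \<le> window_mass k"
proof -
  have "9 * (real k + 1) * exp 1 \<le> 9 * (real k + 1) * 3"
    using exp_le by (intro mult_left_mono) auto
  also have "\<dots> \<le> (real k + 1) * (real k + 1)"
    using assms mult_right_mono[of 27 "real k + 1" "real k + 1"] by simp
  finally show ?thesis
    by (simp add: window_mass_def exp_add divide_simps power2_eq_square mult_ac)
qed

lemma Ioc_subset_grid_window:
  fixes s a b w D :: real
  assumes "0 < w" "s \<le> a" "a - s \<le> D" "b - a \<le> w"
  obtains j :: nat where "j \<le> nat \<lceil>D / w\<rceil>" "{a<..b} \<subseteq> {s + real j * w <.. s + (real j + 2) * w}"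
proof
  define q where "q = (a - s) / w"
  define j where "j = nat \<lfloor>q\<rfloor>"
  have q: "real j \<le> q" "q < real j + 1"
    using assms by (simp_all add: q_def j_def)
  have "a - s = q * w" using assms by (simp add: q_def)
  moreover have "real j * w \<le> q * w" "q * w < (real j + 1) * w"
    using q assms(1) by (simp_all add: mult_right_mono)
  ultimately have "s + real j * w \<le> a" "b < s + (real j + 2) * w"
    using assms(4) by (simp_all add: algebra_simps)
  then show "{a<..b} \<subseteq> {s + real j * w <.. s + (real j + 2) * w}"
    by auto
  have "q \<le> D / w" using assms by (simp add: q_def divide_right_mono)
  then show "j \<le> nat \<lceil>D / w\<rceil>" using q by linarith
qed

context omega_parameters
begin

lemma window_count_le:
  assumes k: "100 \<le> k"
  shows "real (window_count \<theta> k) + 1 \<le> 1002 * exp (2 * real k + 1)"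
proof -
  define m where "m = mean_atom_mass \<theta> (exp (real k))"
  have m: "0 \<le> m" "m \<le> exp (real k)"
    unfolding m_def by (simp_all add: mean_atom_mass_nonneg mean_atom_mass_le)
  have "exp (real k + 1) / window_width \<theta> k \<le> 1000 * exp (2 * real k + 1)"
  proof (cases "m = 0")
    case False
    have "exp (real k + 1) / window_width \<theta> k = exp (real k + 1) * m * (1000 / (9 * real k * (real k + 1)))"
      using k False by (simp add: window_width_def block_mass_bound_def m_def field_simps)
    also have "\<dots> \<le> exp (real k + 1) * exp (real k) * 1000"
    proof (intro mult_mono)
      have "1 \<le> 9 * real k * (real k + 1)"
        using k mult_mono[of 1 "9 * real k" 1 "real k + 1"] by simp
      then show "1000 / (9 * real k * (real k + 1)) \<le> 1000"
        by (simp add: divide_le_eq)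
    qed (use m in auto)
    also have "\<dots> = 1000 * exp (2 * real k + 1)" by (simp flip: exp_add)
    finally show ?thesis .
  qed (simp add: window_width_def block_mass_bound_def m_def)
  moreover have "0 \<le> exp (real k + 1) / window_width \<theta> k"
    using m by (simp add: window_width_def block_mass_bound_def m_def)
  moreover have "1 \<le> exp (2 * real k + 1)" by simp
  ultimately show ?thesis unfolding window_count_def by linarith
qed

lemma window_exponent_le:
  assumes k: "100 \<le> k"
  shows "- (exp (real k) / 2) * window_mass k + 2 * window_width \<theta> k * mean_atom_mass \<theta> (exp (real k))
    \<le> - 3 * real k - 1"
proof -
  define m where "m = mean_atom_mass \<theta> (exp (real k))"
  define y where "y = real k + 1"
  have y: "101 \<le> y" using k by (simp add: y_def)
  have "2 * window_width \<theta> k * m \<le> 18 * y\<^sup>2 / 1000 - 18 * y / 1000"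
  proof (cases "m = 0")
    case False
    then have "2 * window_width \<theta> k * m = 18 * y\<^sup>2 / 1000 - 18 * y / 1000"
      using k by (simp add: window_width_def block_mass_bound_def m_def y_def field_simps power2_eq_square)
    then show ?thesis by simp
  qed (use y in \<open>simp add: power2_eq_square\<close>)
  moreover have "exp (real k) / 2 * window_mass k = y\<^sup>2 / (2 * exp 1) - 9 * y / 2"
    by (simp add: window_mass_def y_def exp_add field_simps power2_eq_square)
  moreover have "y\<^sup>2 / 6 \<le> y\<^sup>2 / (2 * exp 1)"
    using exp_le by (intro divide_left_mono) auto
  moreover have "101 * y \<le> y\<^sup>2"
    using y by (simp add: power2_eq_square mult_right_mono)
  moreover have "- (exp (real k) / 2) * window_mass k = - (exp (real k) / 2 * window_mass k)"
    by simp
  moreover have "real k = y - 1" by (simp add: y_def)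
  ultimately show ?thesis
    unfolding m_def[symmetric] by linarith
qed

end

context cut_sequence
begin

lemma atom_mass_cuts_gap_le_window_mass:
  assumes k: "100 \<le> k" and a: "exp (real k) \<le> Y i" "Y i < exp (real k + 1)"
    and arrival: "e i \<le> 9 * (real k + 1)"
    and lower: "0 < \<theta> 1 \<Longrightarrow> ennreal (block_mass_bound \<theta> k) \<le> atom_mass \<theta> x {0..exp (real k)}"
    and windows: "\<forall>j \<le> window_count \<theta> k. atom_mass \<theta> x (window \<theta> k j) \<le> ennreal (window_mass k)"
  shows "atom_mass \<theta> x {Y i<..Y (Suc i)} \<le> ennreal (window_mass k)"
proof (cases "\<theta> 1 = 0")
  case False
  then have \<theta>1: "0 < \<theta> 1" using theta_nonneg[of 1] by simp
  define w where "w = window_width \<theta> k"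
  have L: "0 < block_mass_bound \<theta> k"
    using k \<theta>1 mean_atom_mass_pos by (simp add: block_mass_bound_def)
  then have w: "0 < w" by (simp add: w_def window_width_def)
  have "ennreal (block_mass_bound \<theta> k) \<le> atom_mass \<theta> x {0..Y i}"
    using a(1) by (intro order_trans[OF lower[OF \<theta>1]] atom_mass_mono) auto
  then have "Y (Suc i) - Y i \<le> e i / block_mass_bound \<theta> k"
    by (rule cuts_gap_le_of_atom_mass[OF L])
  also have "\<dots> \<le> w"
    using L arrival by (simp add: w_def window_width_def divide_right_mono)
  finally obtain j where j: "j \<le> window_count \<theta> k"
    and sub: "{Y i<..Y (Suc i)} \<subseteq> window \<theta> k j"
    using Ioc_subset_grid_window[OF w a(1), of "exp (real k + 1)" "Y (Suc i)"] a
      exp_gt_zero[of "real k"] unfolding window_count_def window_def w_def by force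
  then show ?thesis
    using windows atom_mass_mono[OF sub] by (auto intro: order_trans)
qed (simp add: atom_mass_no_atoms)

lemma mu_cuts_gap_le_block:
  assumes k: "100 \<le> k" and a: "exp (real k) \<le> Y i" "Y i < exp (real k + 1)"
    and arrival: "e i \<le> 9 * (real k + 1)"
    and lower: "0 < \<theta> 1 \<Longrightarrow> ennreal (block_mass_bound \<theta> k) \<le> atom_mass \<theta> x {0..exp (real k)}"
    and windows: "\<forall>j \<le> window_count \<theta> k. atom_mass \<theta> x (window \<theta> k j) \<le> ennreal (window_mass k)"
  shows "mu_Ioc \<theta> x (Y i) (Y (Suc i)) \<le> ennreal ((real k + 1)\<^sup>2 / exp (real k + 1))"
proof -
  have Y_pos: "0 < Y i" using a(1) exp_gt_zero[of "real k"] by linarith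
  have "(\<theta> 0)\<^sup>2 * (Y (Suc i) - Y i) \<le> e i / Y i"
    using Y_pos by (rule diffuse_cuts_gap_le)
  also have "\<dots> \<le> 9 * (real k + 1) / exp (real k)"
    using Y_pos a arrival arrival_nonneg[of i] by (intro frac_le) auto
  finally have "mu_Ioc \<theta> x (Y i) (Y (Suc i))
      \<le> ennreal (9 * (real k + 1) / exp (real k)) + ennreal (window_mass k)"
    unfolding mu_Ioc_eq_atom_mass
    by (intro add_mono ennreal_leI atom_mass_cuts_gap_le_window_mass assms)
  also have "\<dots> = ennreal ((real k + 1)\<^sup>2 / exp (real k + 1))"
    using window_mass_nonneg[OF k] by (simp add: window_mass_def flip: ennreal_plus)
  finally show ?thesis .
qed

text \<open>Where the mean mass of the atoms in \<open>[0, exp k]\<close> is small, the first atom alone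
  provides the bound.\<close>

lemma eventually_block_mass_bound_le:
  assumes "\<forall>\<^sub>F k in sequentially. 0 < \<theta> 1 \<longrightarrow> real k * \<theta> 1 < 1000 * mean_atom_mass \<theta> (exp (real k)) \<longrightarrow>
             ennreal (block_mass_bound \<theta> k) \<le> atom_mass \<theta> x {0..exp (real k)}"
  shows "\<forall>\<^sub>F k in sequentially. 0 < \<theta> 1 \<longrightarrow>
           ennreal (block_mass_bound \<theta> k) \<le> atom_mass \<theta> x {0..exp (real k)}"
  using assms eventually_ge_at_top[of "max 1 (nat \<lceil>x 1\<rceil>)"]
proof eventually_elim
  case (elim k)
  show ?case
  proof (intro impI)
    assume \<theta>1: "0 < \<theta> 1"
    show "ennreal (block_mass_bound \<theta> k) \<le> atom_mass \<theta> x {0..exp (real k)}"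
    proof (cases "real k * \<theta> 1 < 1000 * mean_atom_mass \<theta> (exp (real k))")
      case False
      then have "block_mass_bound \<theta> k \<le> \<theta> 1"
        using elim(2) by (simp add: block_mass_bound_def field_simps)
      moreover have "x 1 \<le> real k"
        using elim(2) real_nat_ceiling_ge[of "x 1"] of_nat_mono[of "nat \<lceil>x 1\<rceil>" k] by simp
      then have "x 1 \<le> exp (real k)"
        using exp_ge_add_one_self[of "real k"] by linarith
      then have "x 1 \<in> {0..exp (real k)}"
        using first_atom_nonneg[OF \<theta>1] by simp
      ultimately show ?thesis
        using atom_mass_ge_first_atom by (blast intro: order_trans ennreal_leI)
    qed (use elim(1) \<theta>1 in auto)
  qed
qed

lemma mu_cuts_gap_le_ln_sq_div_of_block:
  assumes l: "exp 2 \<le> l" "l \<le> Y i"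
    and k: "100 \<le> k" "real k \<le> ln (Y i)" "ln (Y i) < real k + 1"
    and arrival: "e i \<le> 9 * ln (Y i)"
    and lower: "0 < \<theta> 1 \<Longrightarrow> ennreal (block_mass_bound \<theta> k) \<le> atom_mass \<theta> x {0..exp (real k)}"
    and windows: "\<forall>j \<le> window_count \<theta> k. atom_mass \<theta> x (window \<theta> k j) \<le> ennreal (window_mass k)"
  shows "mu_Ioc \<theta> x (Y i) (Y (Suc i)) \<le> ennreal ((ln l)\<^sup>2 / l)"
proof -
  have Y_pos: "0 < Y i" using l exp_gt_zero[of 2] by linarith
  have block: "exp (real k) \<le> Y i" "Y i < exp (real k + 1)"
    using k(2,3) Y_pos by (metis exp_le_cancel_iff exp_ln, metis exp_less_cancel_iff exp_ln)
  have "mu_Ioc \<theta> x (Y i) (Y (Suc i)) \<le> ennreal ((real k + 1)\<^sup>2 / exp (real k + 1))"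
    using arrival k(3) by (intro mu_cuts_gap_le_block k(1) block lower windows) auto
  also have "(real k + 1)\<^sup>2 / exp (real k + 1) \<le> (ln (Y i))\<^sup>2 / Y i"
    using ln_sq_div_antimono[of "Y i" "exp (real k + 1)"] l block by simp
  also have "\<dots> \<le> (ln l)\<^sup>2 / l"
    using l by (intro ln_sq_div_antimono)
  finally show ?thesis by (simp add: ennreal_leI)
qed

theorem mu_cuts_gap_le_ln_sq_div:
  assumes arrival: "\<forall>\<^sub>F i in sequentially. e i \<le> 2 * ln (real i)"
    and arrival_sum: "\<forall>\<^sub>F i in sequentially. real i / 20 \<le> (\<Sum>j<i. e j)"
    and growth: "\<forall>\<^sub>F n in sequentially. atom_mass \<theta> x {0..real n} < ennreal (real n ^ 3)"
    and lower: "\<forall>\<^sub>F k in sequentially. 0 < \<theta> 1 \<longrightarrow> real k * \<theta> 1 < 1000 * mean_atom_mass \<theta> (exp (real k)) \<longrightarrow>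
             ennreal (block_mass_bound \<theta> k) \<le> atom_mass \<theta> x {0..exp (real k)}"
    and windows: "\<forall>\<^sub>F k in sequentially.
             \<forall>j \<le> window_count \<theta> k. atom_mass \<theta> x (window \<theta> k j) \<le> ennreal (window_mass k)"
  shows "\<exists>L0\<ge>0. \<forall>l\<ge>L0. \<forall>i. l \<le> Y i \<longrightarrow> mu_Ioc \<theta> x (Y i) (Y (Suc i)) \<le> ennreal ((ln l)\<^sup>2 / l)"
proof -
  obtain A where A: "\<And>i. A \<le> Y i \<Longrightarrow> e i \<le> 9 * ln (Y i)"
    using arrival_le_nine_ln_cut[OF arrival arrival_sum growth] by blast
  obtain K where K: "\<And>k. K \<le> k \<Longrightarrow> (0 < \<theta> 1 \<longrightarrow>
      ennreal (block_mass_bound \<theta> k) \<le> atom_mass \<theta> x {0..exp (real k)}) \<and>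
      (\<forall>j \<le> window_count \<theta> k. atom_mass \<theta> x (window \<theta> k j) \<le> ennreal (window_mass k))"
    using eventually_conj[OF eventually_block_mass_bound_le[OF lower] windows]
    unfolding eventually_sequentially by blast
  define L0 where "L0 = max A (exp (real K + 100))"
  have "mu_Ioc \<theta> x (Y i) (Y (Suc i)) \<le> ennreal ((ln l)\<^sup>2 / l)" if l: "L0 \<le> l" "l \<le> Y i" for l i
  proof -
    define k where "k = nat \<lfloor>ln (Y i)\<rfloor>"
    have exp_l: "exp (real K + 100) \<le> l" using l by (simp add: L0_def)
    then have "real K + 100 \<le> ln (Y i)"
      using l ln_mono[of "exp (real K + 100)" "Y i"] by simp
    then have k: "K \<le> k" "100 \<le> k" "real k \<le> ln (Y i)" "ln (Y i) < real k + 1"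
      unfolding k_def by linarith+
    have "exp 2 \<le> exp (real K + 100)" by simp
    then have "exp 2 \<le> l" using exp_l by linarith
    then show ?thesis
      using A[of i] l K[OF k(1)]
      by (intro mu_cuts_gap_le_ln_sq_div_of_block[OF _ _ k(2-4)]) (auto simp: L0_def)
  qed
  moreover have "0 \<le> L0" by (simp add: L0_def max.coboundedI2 less_imp_le)
  ultimately show ?thesis by blast
qed

end

section \<open>Almost sure bounds\<close>

lemma summable_inverse_square: "summable (\<lambda>n. 1 / (real n)\<^sup>2)"
  using inverse_power_summable[of 2, where 'a=real] by (simp add: divide_inverse)

lemma mult_emeasure_le_nn_integral:
  assumes [measurable]: "f \<in> borel_measurable M"
  shows "c * emeasure M {x\<in>space M. c \<le> f x} \<le> (\<integral>\<^sup>+x. f x \<partial>M)"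
proof -
  have "c * emeasure M {x\<in>space M. c \<le> f x} = (\<integral>\<^sup>+x. c * indicator {x\<in>space M. c \<le> f x} x \<partial>M)"
    by (simp add: nn_integral_cmult_indicator)
  also have "\<dots> \<le> (\<integral>\<^sup>+x. f x \<partial>M)"
    by (intro nn_integral_mono) (auto split: split_indicator)
  finally show ?thesis .
qed

context prob_space
begin

lemma prob_ge_le_exp_mgf:
  assumes s: "0 < s" and [measurable]: "f \<in> borel_measurable M"
    and mgf: "(\<integral>\<^sup>+\<omega>. ennreal (exp (s * f \<omega>)) \<partial>M) \<le> ennreal B" and "0 \<le> B"
  shows "prob {\<omega>\<in>space M. a \<le> f \<omega>} \<le> exp (- s * a) * B"
proof -
  have "(\<lambda>\<omega>. f \<omega> * indicator (space M) \<omega>) \<in> borel_measurable M" by measurable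
  from Chernoff_ineq_nn_integral_ge[OF s sets.top this, of a]
  have "emeasure M {\<omega>\<in>space M. a \<le> f \<omega>}
      \<le> ennreal (exp (- s * a)) * (\<integral>\<^sup>+\<omega>. ennreal (exp (s * f \<omega>)) \<partial>M)"
    by simp
  also have "\<dots> \<le> ennreal (exp (- s * a) * B)"
    using mgf \<open>0 \<le> B\<close> by (simp add: ennreal_mult mult_left_mono)
  finally show ?thesis
    using \<open>0 \<le> B\<close> by (simp add: emeasure_eq_measure ennreal_le_iff)
qed

lemma nn_integral_exp_indicator:
  assumes [measurable]: "Z \<in> borel_measurable M" "W \<in> sets borel"
  shows "(\<integral>\<^sup>+\<omega>. ennreal (exp (c * indicator W (Z \<omega>))) \<partial>M)
    = ennreal (1 + (exp c - 1) * prob {\<omega>\<in>space M. Z \<omega> \<in> W})"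
proof -
  let ?A = "{\<omega>\<in>space M. Z \<omega> \<in> W}"
  have A: "?A \<in> events" by measurable
  have "(\<integral>\<^sup>+\<omega>. ennreal (exp (c * indicator W (Z \<omega>))) \<partial>M)
      = (\<integral>\<^sup>+\<omega>. ennreal (exp c) * indicator ?A \<omega> + indicator (space M - ?A) \<omega> \<partial>M)"
    by (intro nn_integral_cong) (auto split: split_indicator)
  also have "\<dots> = ennreal (exp c) * emeasure M ?A + emeasure M (space M - ?A)"
    using A by (subst nn_integral_add) (auto simp: nn_integral_cmult_indicator)
  also have "\<dots> = ennreal (exp c * prob ?A + (1 - prob ?A))"
    using A by (simp add: emeasure_eq_measure prob_compl ennreal_mult ennreal_plus)
  finally show ?thesis by (simp add: algebra_simps)
qed

lemma AE_eventually_of_summable_prob: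
  assumes [measurable]: "\<And>n. {\<omega>\<in>space M. \<not> P n \<omega>} \<in> events"
    and "\<forall>\<^sub>F n in sequentially. prob {\<omega>\<in>space M. \<not> P n \<omega>} \<le> b n" and "summable b"
  shows "AE \<omega> in M. \<forall>\<^sub>F n in sequentially. P n \<omega>"
proof -
  have "summable (\<lambda>n. prob {\<omega>\<in>space M. \<not> P n \<omega>})"
    using assms(2) by (intro summable_comparison_test_ev[OF _ assms(3)]) (auto elim: eventually_mono)
  then have "AE \<omega> in M. \<forall>\<^sub>F n in sequentially. \<omega> \<in> space M - {\<omega>\<in>space M. \<not> P n \<omega>}"
    by (intro borel_cantelli_AE1) (auto simp: emeasure_eq_measure)
  then show ?thesis by (rule AE_mp) (auto elim: eventually_mono intro!: AE_I2)
qed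

end

locale cut_model = prob_space M + omega_parameters \<theta>
  for M :: "'a measure" and \<theta> :: "nat \<Rightarrow> real" +
  fixes X E :: "nat \<Rightarrow> 'a \<Rightarrow> real"
  assumes X_exponential:
      "\<And>i. 1 \<le> i \<Longrightarrow> 0 < \<theta> i \<Longrightarrow> distributed M lborel (X i) (exponential_density (\<theta> i))"
    and X_measurable [measurable]: "\<And>i. 1 \<le> i \<Longrightarrow> X i \<in> borel_measurable M"
    and E_exponential: "\<And>j. distributed M lborel (E j) (exponential_density 1)"
    and indep: "indep_vars (\<lambda>_. borel) (\<lambda>k. case k of Inl i \<Rightarrow> X i | Inr j \<Rightarrow> E j)
                  (Inl ` {1..} \<union> Inr ` UNIV)"
begin

lemma E_measurable [measurable]: "E j \<in> borel_measurable M"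
  using E_exponential[of j] by (simp add: distributed_def)

lemma nn_integral_prod_X:
  assumes J: "finite J" "J \<subseteq> {1..}"
    and [measurable]: "\<And>i. g i \<in> borel_measurable borel"
  shows "(\<integral>\<^sup>+\<omega>. (\<Prod>i\<in>J. g i (X i \<omega>)) \<partial>M) = (\<Prod>i\<in>J. \<integral>\<^sup>+\<omega>. g i (X i \<omega>) \<partial>M)"
proof -
  let ?Z = "\<lambda>k. case k of Inl i \<Rightarrow> X i | Inr j \<Rightarrow> E j"
  let ?G = "\<lambda>k. case k of Inl i \<Rightarrow> g i | Inr j \<Rightarrow> g 0"
  have "indep_vars (\<lambda>_. borel) ?Z (Inl ` J)"
    by (rule indep_vars_subset[OF indep]) (use J in auto)
  then have "indep_vars (\<lambda>_. borel) (\<lambda>k. ?G k \<circ> ?Z k) (Inl ` J)"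
    by (rule indep_vars_compose) (auto split: sum.split)
  then have "(\<integral>\<^sup>+\<omega>. (\<Prod>k\<in>Inl ` J. (?G k \<circ> ?Z k) \<omega>) \<partial>M) = (\<Prod>k\<in>Inl ` J. \<integral>\<^sup>+\<omega>. (?G k \<circ> ?Z k) \<omega> \<partial>M)"
    by (rule indep_vars_nn_integral[rotated]) (use J in auto)
  then show ?thesis by (simp add: prod.reindex)
qed

lemma nn_integral_prod_E:
  assumes J: "finite J" and [measurable]: "\<And>j. g j \<in> borel_measurable borel"
  shows "(\<integral>\<^sup>+\<omega>. (\<Prod>j\<in>J. g j (E j \<omega>)) \<partial>M) = (\<Prod>j\<in>J. \<integral>\<^sup>+\<omega>. g j (E j \<omega>) \<partial>M)"
proof -
  let ?Z = "\<lambda>k. case k of Inl i \<Rightarrow> X i | Inr j \<Rightarrow> E j"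
  let ?G = "\<lambda>k. case k of Inl i \<Rightarrow> g 0 | Inr j \<Rightarrow> g j"
  have "indep_vars (\<lambda>_. borel) ?Z (Inr ` J)"
    by (rule indep_vars_subset[OF indep]) (use J in auto)
  then have "indep_vars (\<lambda>_. borel) (\<lambda>k. ?G k \<circ> ?Z k) (Inr ` J)"
    by (rule indep_vars_compose) (auto split: sum.split)
  then have "(\<integral>\<^sup>+\<omega>. (\<Prod>k\<in>Inr ` J. (?G k \<circ> ?Z k) \<omega>) \<partial>M) = (\<Prod>k\<in>Inr ` J. \<integral>\<^sup>+\<omega>. (?G k \<circ> ?Z k) \<omega> \<partial>M)"
    by (rule indep_vars_nn_integral[rotated]) (use J in auto)
  then show ?thesis by (simp add: prod.reindex)
qed

lemma prob_X_greater:
  assumes "1 \<le> i" "0 < \<theta> i" "0 \<le> a"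
  shows "prob {\<omega>\<in>space M. a < X i \<omega>} = exp (- a * \<theta> i)"
  using exponential_distributedD_gt[OF X_exponential[OF assms(1,2)] assms(3,2)] by simp

lemma X_nonneg_AE:
  assumes "1 \<le> i" "0 < \<theta> i"
  shows "AE \<omega> in M. 0 \<le> X i \<omega>"
proof -
  have "prob {\<omega>\<in>space M. X i \<omega> \<le> 0} = 0"
    using exponential_distributedD_le[OF X_exponential[OF assms], of 0] assms by simp
  then have "{\<omega>\<in>space M. X i \<omega> \<le> 0} \<in> null_sets M"
    using assms by (simp add: null_sets_def emeasure_eq_measure)
  then show ?thesis
    by (rule AE_I'[where N="{\<omega>\<in>space M. X i \<omega> \<le> 0}"]) auto
qed

lemma prob_X_Ioc:
  assumes "1 \<le> i" "0 < \<theta> i" "0 \<le> u" "u \<le> v"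
  shows "prob {\<omega>\<in>space M. X i \<omega> \<in> {u<..v}} = exp (- u * \<theta> i) - exp (- v * \<theta> i)"
proof -
  have "{\<omega>\<in>space M. X i \<omega> \<in> {u<..v}} = {\<omega>\<in>space M. u < X i \<omega>} - {\<omega>\<in>space M. v < X i \<omega>}"
    by auto
  moreover have "{\<omega>\<in>space M. v < X i \<omega>} \<subseteq> {\<omega>\<in>space M. u < X i \<omega>}" using assms by auto
  ultimately show ?thesis
    using assms by (simp add: finite_measure_Diff prob_X_greater)
qed

lemma prob_X_Icc0:
  assumes "1 \<le> i" "0 < \<theta> i" "0 \<le> l"
  shows "prob {\<omega>\<in>space M. X i \<omega> \<in> {0..l}} = 1 - exp (- l * \<theta> i)"
proof -
  have "prob {\<omega>\<in>space M. X i \<omega> \<in> {0..l}} = prob {\<omega>\<in>space M. X i \<omega> \<le> l}"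
    using assms X_nonneg_AE[OF assms(1,2)] by (intro finite_measure_eq_AE) auto
  then show ?thesis
    using exponential_distributedD_le[OF X_exponential[OF assms(1,2)] assms(3,2)] by simp
qed

lemma prob_E_greater: "0 \<le> a \<Longrightarrow> prob {\<omega>\<in>space M. a < E j \<omega>} = exp (- a)"
  using exponential_distributedD_gt[OF E_exponential[of j]] by simp

lemma E_nonneg_AE: "AE \<omega> in M. 0 \<le> E j \<omega>"
proof -
  have "prob {\<omega>\<in>space M. E j \<omega> \<le> 0} = 0"
    using exponential_distributedD_le[OF E_exponential[of j], of 0] by simp
  then have "{\<omega>\<in>space M. E j \<omega> \<le> 0} \<in> null_sets M"
    by (simp add: null_sets_def emeasure_eq_measure)
  then show ?thesis
    by (rule AE_I'[where N="{\<omega>\<in>space M. E j \<omega> \<le> 0}"]) auto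
qed

lemma atom_sum_measurable [measurable]:
  assumes "J \<subseteq> {1..}" "W \<in> sets borel"
  shows "(\<lambda>\<omega>. \<Sum>i\<in>J. \<theta> i * indicator W (X i \<omega>)) \<in> borel_measurable M"
proof (intro borel_measurable_sum)
  fix i assume "i \<in> J"
  then have [measurable]: "X i \<in> borel_measurable M" using assms by auto
  show "(\<lambda>\<omega>. \<theta> i * indicator W (X i \<omega>)) \<in> borel_measurable M" using assms by measurable
qed

lemma atom_mass_measurable [measurable]:
  assumes "W \<in> sets borel"
  shows "(\<lambda>\<omega>. atom_mass \<theta> (\<lambda>n. X n \<omega>) W) \<in> borel_measurable M"
  unfolding atom_mass_eq_SUP using atom_sum_measurable[OF _ assms] by measurable

lemma nn_integral_exp_atom_sum_le:
  assumes J: "finite J" "J \<subseteq> {1..}" and [measurable]: "W \<in> sets borel"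
  shows "(\<integral>\<^sup>+\<omega>. ennreal (exp (s * (\<Sum>i\<in>J. \<theta> i * indicator W (X i \<omega>)))) \<partial>M)
    \<le> ennreal (exp (\<Sum>i\<in>J. prob {\<omega>\<in>space M. X i \<omega> \<in> W} * (exp (s * \<theta> i) - 1)))"
proof -
  let ?p = "\<lambda>i. prob {\<omega>\<in>space M. X i \<omega> \<in> W}"
  have "(\<integral>\<^sup>+\<omega>. ennreal (exp (s * (\<Sum>i\<in>J. \<theta> i * indicator W (X i \<omega>)))) \<partial>M)
      = (\<integral>\<^sup>+\<omega>. (\<Prod>i\<in>J. ennreal (exp ((s * \<theta> i) * indicator W (X i \<omega>)))) \<partial>M)"
    by (intro nn_integral_cong) (simp add: sum_distrib_left exp_sum[OF J(1)] prod_ennreal mult.assoc)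
  also have "\<dots> = (\<Prod>i\<in>J. \<integral>\<^sup>+\<omega>. ennreal (exp ((s * \<theta> i) * indicator W (X i \<omega>))) \<partial>M)"
    by (rule nn_integral_prod_X[OF J]) measurable
  also have "\<dots> = (\<Prod>i\<in>J. ennreal (1 + (exp (s * \<theta> i) - 1) * ?p i))"
    using J by (intro prod.cong refl nn_integral_exp_indicator) auto
  also have "\<dots> \<le> (\<Prod>i\<in>J. ennreal (exp (?p i * (exp (s * \<theta> i) - 1))))"
    using exp_ge_add_one_self by (intro prod_mono_ennreal ennreal_leI) (simp add: mult.commute)
  also have "\<dots> = ennreal (exp (\<Sum>i\<in>J. ?p i * (exp (s * \<theta> i) - 1)))"
    by (simp add: exp_sum[OF J(1)] prod_ennreal)
  finally show ?thesis .
qed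

lemma prob_atom_sum_ge_le:
  assumes J: "finite J" "J \<subseteq> {1..}" and W: "W \<in> sets borel" and s: "0 < s"
  shows "prob {\<omega>\<in>space M. t \<le> (\<Sum>i\<in>J. \<theta> i * indicator W (X i \<omega>))}
     \<le> exp (- s * t + (\<Sum>i\<in>J. prob {\<omega>\<in>space M. X i \<omega> \<in> W} * (exp (s * \<theta> i) - 1)))"
  unfolding exp_add
  by (rule prob_ge_le_exp_mgf[OF s atom_sum_measurable[OF J(2) W] nn_integral_exp_atom_sum_le[OF J W]])
     simp

lemma prob_atom_sum_le_le:
  assumes J: "finite J" "J \<subseteq> {1..}" and W: "W \<in> sets borel" and s: "0 < s"
  shows "prob {\<omega>\<in>space M. (\<Sum>i\<in>J. \<theta> i * indicator W (X i \<omega>)) \<le> u}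
     \<le> exp (s * u - (\<Sum>i\<in>J. prob {\<omega>\<in>space M. X i \<omega> \<in> W} * (1 - exp (- s * \<theta> i))))"
proof -
  let ?A = "\<lambda>\<omega>. \<Sum>i\<in>J. \<theta> i * indicator W (X i \<omega>)"
  let ?B = "\<Sum>i\<in>J. prob {\<omega>\<in>space M. X i \<omega> \<in> W} * (exp (- s * \<theta> i) - 1)"
  have "(\<integral>\<^sup>+\<omega>. ennreal (exp (s * - ?A \<omega>)) \<partial>M) \<le> ennreal (exp ?B)"
    using nn_integral_exp_atom_sum_le[OF J W, of "- s"] by (simp only: mult_minus_left mult_minus_right)
  then have "prob {\<omega>\<in>space M. - u \<le> - ?A \<omega>} \<le> exp (- s * - u) * exp ?B"
    by (rule prob_ge_le_exp_mgf[OF s borel_measurable_uminus[OF atom_sum_measurable[OF J(2) W]]]) simp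
  moreover have "?B = - (\<Sum>i\<in>J. prob {\<omega>\<in>space M. X i \<omega> \<in> W} * (1 - exp (- s * \<theta> i)))"
    by (simp add: sum_negf[symmetric] algebra_simps)
  ultimately show ?thesis by (simp add: exp_diff exp_minus divide_inverse)
qed

lemma atom_sum_le_atom_mass:
  "ennreal (\<Sum>i\<in>{1..n}. \<theta> i * indicator W (X i \<omega>)) \<le> atom_mass \<theta> (\<lambda>n. X n \<omega>) W"
  unfolding atom_mass_eq_SUP by (rule SUP_upper) simp

lemma prob_atom_mass_greater_le:
  assumes W [measurable]: "W \<in> sets borel" and s: "0 < s" and t: "0 \<le> t"
    and B: "\<And>n. (\<Sum>i\<in>{1..n}. prob {\<omega>\<in>space M. X i \<omega> \<in> W} * (exp (s * \<theta> i) - 1)) \<le> B"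
  shows "prob {\<omega>\<in>space M. ennreal t < atom_mass \<theta> (\<lambda>n. X n \<omega>) W} \<le> exp (- s * t + B)"
proof -
  let ?P = "\<lambda>n \<omega>. \<Sum>i\<in>{1..n}. \<theta> i * indicator W (X i \<omega>)"
  let ?A = "\<lambda>n. {\<omega>\<in>space M. t \<le> ?P n \<omega>}"
  have sub: "{\<omega>\<in>space M. ennreal t < atom_mass \<theta> (\<lambda>n. X n \<omega>) W} \<subseteq> (\<Union>n. ?A n)"
    using t by (force simp: atom_mass_eq_SUP less_SUP_iff ennreal_less_iff intro: less_imp_le)
  have A [measurable]: "?A n \<in> events" for n by measurable
  have "incseq ?A"
    by (intro incseq_SucI subsetI) (auto intro: order_trans sum_mono2 simp: theta_nonneg)
  then have "(\<lambda>n. prob (?A n)) \<longlonglongrightarrow> prob (\<Union>n. ?A n)"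
    by (rule finite_Lim_measure_incseq[rotated]) (use A in blast)
  moreover have "prob (?A n) \<le> exp (- s * t + B)" for n
    using prob_atom_sum_ge_le[OF _ _ W s, of "{1..n}" t] B[of n] by (auto intro: order_trans)
  ultimately have "prob (\<Union>n. ?A n) \<le> exp (- s * t + B)"
    by (intro LIMSEQ_le_const2) auto
  moreover have "(\<Union>n. ?A n) \<in> events" by measurable
  ultimately show ?thesis
    using finite_measure_mono[OF sub] by (blast intro: order_trans)
qed

lemma prob_atom_mass_less_le:
  assumes W [measurable]: "W \<in> sets borel" and s: "0 < s"
    and Q: "(\<lambda>n. \<Sum>i\<in>{1..n}. prob {\<omega>\<in>space M. X i \<omega> \<in> W} * (1 - exp (- s * \<theta> i))) \<longlonglongrightarrow> Q"
  shows "prob {\<omega>\<in>space M. atom_mass \<theta> (\<lambda>n. X n \<omega>) W < ennreal u} \<le> exp (s * u - Q)"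
proof -
  let ?P = "\<lambda>n \<omega>. \<Sum>i\<in>{1..n}. \<theta> i * indicator W (X i \<omega>)"
  have "prob {\<omega>\<in>space M. atom_mass \<theta> (\<lambda>n. X n \<omega>) W < ennreal u}
      \<le> exp (s * u - (\<Sum>i\<in>{1..n}. prob {\<omega>\<in>space M. X i \<omega> \<in> W} * (1 - exp (- s * \<theta> i))))" for n
  proof -
    have "?P n \<omega> \<le> u" if "atom_mass \<theta> (\<lambda>n. X n \<omega>) W < ennreal u" for \<omega>
    proof -
      have "ennreal (?P n \<omega>) < ennreal u"
        using atom_sum_le_atom_mass that by (rule le_less_trans)
      moreover have "0 \<le> ?P n \<omega>" by (intro sum_nonneg) (simp add: theta_nonneg)
      ultimately show ?thesis by (simp add: ennreal_less_iff)
    qed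
    then have "{\<omega>\<in>space M. atom_mass \<theta> (\<lambda>n. X n \<omega>) W < ennreal u} \<subseteq> {\<omega>\<in>space M. ?P n \<omega> \<le> u}"
      by blast
    then have "prob {\<omega>\<in>space M. atom_mass \<theta> (\<lambda>n. X n \<omega>) W < ennreal u} \<le> prob {\<omega>\<in>space M. ?P n \<omega> \<le> u}"
      by (intro finite_measure_mono) measurable
    also have "\<dots> \<le> exp (s * u - (\<Sum>i\<in>{1..n}. prob {\<omega>\<in>space M. X i \<omega> \<in> W} * (1 - exp (- s * \<theta> i))))"
      by (rule prob_atom_sum_le_le[OF _ _ W s]) auto
    finally show ?thesis .
  qed
  moreover have "(\<lambda>n. exp (s * u - (\<Sum>i\<in>{1..n}. prob {\<omega>\<in>space M. X i \<omega> \<in> W} * (1 - exp (- s * \<theta> i)))))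
      \<longlonglongrightarrow> exp (s * u - Q)"
    by (intro tendsto_intros Q)
  ultimately show ?thesis
    by (intro LIMSEQ_le_const) auto
qed

lemma prob_X_Ioc_mult_le:
  assumes i: "1 \<le> i" and l: "0 < l" "l \<le> u" and w: "0 \<le> w"
  shows "prob {\<omega>\<in>space M. X i \<omega> \<in> {u<..u+w}} * (exp (l / 2 * \<theta> i) - 1)
    \<le> w * (\<theta> i * (1 - exp (- l * \<theta> i)))"
proof (cases "\<theta> i = 0")
  case False
  then have \<theta>: "0 < \<theta> i" using theta_nonneg[of i] by simp
  let ?t = "\<theta> i"
  have "exp (- u * ?t) - exp (- (u + w) * ?t) = exp (- u * ?t) * (1 - exp (- (w * ?t)))"
    by (simp add: algebra_simps flip: exp_add)
  also have "\<dots> \<le> exp (- l * ?t) * (w * ?t)"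
    using one_minus_exp_neg_le[of "w * ?t"] l \<theta> w by (intro mult_mono) auto
  finally have "prob {\<omega>\<in>space M. X i \<omega> \<in> {u<..u+w}} \<le> exp (- l * ?t) * (w * ?t)"
    using prob_X_Ioc[OF i \<theta>, of u "u + w"] l w by simp
  then have "prob {\<omega>\<in>space M. X i \<omega> \<in> {u<..u+w}} * (exp (l / 2 * ?t) - 1)
      \<le> exp (- l * ?t) * (w * ?t) * (exp (l / 2 * ?t) - 1)"
    using l \<theta> by (intro mult_right_mono) auto
  also have "\<dots> = w * ?t * (exp (- (l / 2 * ?t)) - exp (- l * ?t))"
    by (simp add: algebra_simps flip: exp_add)
  also have "\<dots> \<le> w * ?t * (1 - exp (- l * ?t))"
    using l \<theta> w by (intro mult_left_mono) auto
  finally show ?thesis by (simp add: mult_ac)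
qed simp

lemma prob_atom_mass_window_greater_le:
  assumes l: "0 < l" "l \<le> u" and w: "0 \<le> w" and t: "0 \<le> t"
  shows "prob {\<omega>\<in>space M. ennreal t < atom_mass \<theta> (\<lambda>n. X n \<omega>) {u<..u+w}}
    \<le> exp (- (l / 2) * t + w * mean_atom_mass \<theta> l)"
proof (rule prob_atom_mass_greater_le)
  fix n
  have "(\<Sum>i\<in>{1..n}. prob {\<omega>\<in>space M. X i \<omega> \<in> {u<..u+w}} * (exp (l / 2 * \<theta> i) - 1))
      \<le> (\<Sum>i\<in>{1..n}. w * (\<theta> i * (1 - exp (- l * \<theta> i))))"
    by (intro sum_mono prob_X_Ioc_mult_le l w) auto
  also have "\<dots> = w * (\<Sum>i\<in>{1..n}. \<theta> i * (1 - exp (- l * \<theta> i)))"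
    by (rule sum_distrib_left[symmetric])
  also have "\<dots> \<le> w * mean_atom_mass \<theta> l"
    using l w by (intro mult_left_mono mean_atom_mass_ge_partial_sum) auto
  finally show "(\<Sum>i\<in>{1..n}. prob {\<omega>\<in>space M. X i \<omega> \<in> {u<..u+w}} * (exp (l / 2 * \<theta> i) - 1))
      \<le> w * mean_atom_mass \<theta> l" .
qed (use l t in auto)

lemma prob_X_Icc0_mult_bounds:
  assumes \<theta>1: "0 < \<theta> 1" and i: "1 \<le> i" and l: "0 \<le> l"
  defines "p \<equiv> prob {\<omega>\<in>space M. X i \<omega> \<in> {0..l}} * (1 - exp (- (1 / \<theta> 1) * \<theta> i))"
  shows "\<theta> i * (1 - exp (- l * \<theta> i)) / (2 * \<theta> 1) \<le> p" "p \<le> l * (\<theta> i)\<^sup>2 / \<theta> 1"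
proof -
  have "\<theta> i * (1 - exp (- l * \<theta> i)) / (2 * \<theta> 1) \<le> p \<and> p \<le> l * (\<theta> i)\<^sup>2 / \<theta> 1"
  proof (cases "\<theta> i = 0")
    case False
    then have \<theta>: "0 < \<theta> i" using theta_nonneg[of i] by simp
    have ratio: "0 \<le> \<theta> i / \<theta> 1" "\<theta> i / \<theta> 1 \<le> 1"
      using \<theta> \<theta>1 theta_antimono[OF order.refl i] by auto
    have p: "p = (1 - exp (- l * \<theta> i)) * (1 - exp (- (\<theta> i / \<theta> 1)))"
      unfolding p_def using prob_X_Icc0[OF i \<theta> l] by simp
    have q0: "0 \<le> 1 - exp (- l * \<theta> i)" using l \<theta> by simp
    have "(1 - exp (- l * \<theta> i)) * ((\<theta> i / \<theta> 1) / 2) \<le> p"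
      unfolding p by (intro mult_left_mono half_le_one_minus_exp_neg ratio q0)
    moreover have "p \<le> (l * \<theta> i) * (\<theta> i / \<theta> 1)"
      unfolding p using one_minus_exp_neg_le[of "l * \<theta> i"] one_minus_exp_neg_le[of "\<theta> i / \<theta> 1"] ratio q0
      by (intro mult_mono) auto
    ultimately show ?thesis using \<theta>1 by (simp add: field_simps power2_eq_square)
  qed (simp add: p_def)
  then show "\<theta> i * (1 - exp (- l * \<theta> i)) / (2 * \<theta> 1) \<le> p" "p \<le> l * (\<theta> i)\<^sup>2 / \<theta> 1"
    by auto
qed

lemma prob_atom_mass_less_le_mean:
  assumes \<theta>1: "0 < \<theta> 1" and l: "0 \<le> l"
  shows "prob {\<omega>\<in>space M. atom_mass \<theta> (\<lambda>n. X n \<omega>) {0..l} < ennreal u}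
    \<le> exp (u / \<theta> 1 - mean_atom_mass \<theta> l / (2 * \<theta> 1))"
proof -
  define p where "p i = prob {\<omega>\<in>space M. X i \<omega> \<in> {0..l}} * (1 - exp (- (1 / \<theta> 1) * \<theta> i))" for i
  note bounds = prob_X_Icc0_mult_bounds[OF \<theta>1 _ l, folded p_def]
  have p_nonneg: "0 \<le> p (Suc i)" for i
  proof -
    have "0 \<le> \<theta> (Suc i) * (1 - exp (- l * \<theta> (Suc i))) / (2 * \<theta> 1)"
      using mean_term_nonneg[OF l] \<theta>1 by simp
    then show ?thesis using bounds(1)[of "Suc i"] by linarith
  qed
  have summable: "summable (\<lambda>i. p (Suc i))"
  proof (rule summable_comparison_test')
    show "summable (\<lambda>i. l / \<theta> 1 * (\<theta> (Suc i))\<^sup>2)"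
      by (intro summable_mult atom_sq_summable)
    show "norm (p (Suc i)) \<le> l / \<theta> 1 * (\<theta> (Suc i))\<^sup>2" for i
      using p_nonneg[of i] bounds(2)[of "Suc i"] by simp
  qed
  have "(\<lambda>n. \<Sum>i\<in>{1..n}. p i) \<longlonglongrightarrow> (\<Sum>i. p (Suc i))"
    using summable_LIMSEQ[OF summable] by (simp add: sum.atLeast1_atMost_eq)
  then have "prob {\<omega>\<in>space M. atom_mass \<theta> (\<lambda>n. X n \<omega>) {0..l} < ennreal u}
      \<le> exp ((1 / \<theta> 1) * u - (\<Sum>i. p (Suc i)))"
    unfolding p_def using \<theta>1 by (intro prob_atom_mass_less_le) simp_all
  also have "\<dots> \<le> exp (u / \<theta> 1 - mean_atom_mass \<theta> l / (2 * \<theta> 1))"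
  proof -
    have "mean_atom_mass \<theta> l / (2 * \<theta> 1)
        = (\<Sum>i. \<theta> (Suc i) * (1 - exp (- l * \<theta> (Suc i))) / (2 * \<theta> 1))"
      unfolding mean_atom_mass_def by (rule suminf_divide[symmetric, OF mean_atom_mass_summable[OF l]])
    also have "\<dots> \<le> (\<Sum>i. p (Suc i))"
      by (rule suminf_le[OF bounds(1) summable_divide[OF mean_atom_mass_summable[OF l]] summable]) simp
    finally show ?thesis by simp
  qed
  finally show ?thesis .
qed

lemma nn_integral_atom_mass_le:
  assumes l: "0 \<le> l"
  shows "(\<integral>\<^sup>+\<omega>. atom_mass \<theta> (\<lambda>n. X n \<omega>) {0..l} \<partial>M) \<le> ennreal l"
proof -
  have "(\<integral>\<^sup>+\<omega>. atom_mass \<theta> (\<lambda>n. X n \<omega>) {0..l} \<partial>M)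
      = (\<Sum>i. \<integral>\<^sup>+\<omega>. ennreal (\<theta> (Suc i) * indicator {0..l} (X (Suc i) \<omega>)) \<partial>M)"
    unfolding atom_mass_def by (rule nn_integral_suminf) measurable
  also have "\<dots> \<le> (\<Sum>i. ennreal (l * (\<theta> (Suc i))\<^sup>2))"
  proof (intro suminf_le)
    fix i
    let ?A = "{\<omega>\<in>space M. X (Suc i) \<omega> \<in> {0..l}}"
    have "(\<integral>\<^sup>+\<omega>. ennreal (\<theta> (Suc i) * indicator {0..l} (X (Suc i) \<omega>)) \<partial>M)
        = (\<integral>\<^sup>+\<omega>. ennreal (\<theta> (Suc i)) * indicator ?A \<omega> \<partial>M)"
      by (intro nn_integral_cong) (auto split: split_indicator)
    also have "\<dots> = ennreal (\<theta> (Suc i) * prob ?A)"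
      using theta_nonneg by (simp add: nn_integral_cmult_indicator emeasure_eq_measure ennreal_mult)
    also have "\<dots> \<le> ennreal (l * (\<theta> (Suc i))\<^sup>2)"
    proof (cases "\<theta> (Suc i) = 0")
      case False
      then have "0 < \<theta> (Suc i)" using theta_nonneg[of "Suc i"] by simp
      then show ?thesis
        using prob_X_Icc0[of "Suc i" l] mean_term_le[OF l, of "Suc i"] l by (intro ennreal_leI) simp
    qed simp
    finally show "(\<integral>\<^sup>+\<omega>. ennreal (\<theta> (Suc i) * indicator {0..l} (X (Suc i) \<omega>)) \<partial>M)
        \<le> ennreal (l * (\<theta> (Suc i))\<^sup>2)" .
  qed (simp_all add: summableI)
  also have "\<dots> = ennreal (\<Sum>i. l * (\<theta> (Suc i))\<^sup>2)"
    by (rule suminf_ennreal2) (use l atom_sq_summable in \<open>auto intro: summable_mult\<close>)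
  also have "\<dots> \<le> ennreal l"
    using l atom_sq_suminf_le_1
    by (intro ennreal_leI) (simp add: suminf_mult[OF atom_sq_summable] mult_left_le)
  finally show ?thesis .
qed

lemma prob_atom_mass_ge_cube_le:
  assumes l: "1 \<le> l"
  shows "prob {\<omega>\<in>space M. ennreal (l ^ 3) \<le> atom_mass \<theta> (\<lambda>n. X n \<omega>) {0..l}} \<le> 1 / l\<^sup>2"
proof -
  have "ennreal (l ^ 3) * emeasure M {\<omega>\<in>space M. ennreal (l ^ 3) \<le> atom_mass \<theta> (\<lambda>n. X n \<omega>) {0..l}}
      \<le> ennreal l"
    using l by (intro order_trans[OF mult_emeasure_le_nn_integral nn_integral_atom_mass_le]) auto
  then have "l ^ 3 * prob {\<omega>\<in>space M. ennreal (l ^ 3) \<le> atom_mass \<theta> (\<lambda>n. X n \<omega>) {0..l}} \<le> l"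
    using l by (simp add: emeasure_eq_measure ennreal_mult[symmetric] ennreal_le_iff del: ennreal_mult')
  then show ?thesis using l by (simp add: field_simps power2_eq_square power3_eq_cube)
qed

lemma prob_E_greater_2ln:
  assumes "1 \<le> i"
  shows "prob {\<omega>\<in>space M. 2 * ln (real i) < E j \<omega>} = 1 / (real i)\<^sup>2"
proof -
  have "prob {\<omega>\<in>space M. 2 * ln (real i) < E j \<omega>} = exp (- (2 * ln (real i)))"
    using assms by (intro prob_E_greater) simp
  also have "\<dots> = 1 / (real i)\<^sup>2"
  proof -
    have "2 * ln (real i) = ln ((real i)\<^sup>2)"
      using assms ln_realpow[of "real i" 2] by simp
    then show ?thesis
      using assms by (simp only: exp_minus exp_ln zero_less_power of_nat_0_less_iff) (simp add: divide_inverse)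
  qed
  finally show ?thesis .
qed

text \<open>The exact value is \<open>1 / 2\<close>; comparing \<open>exp (- E j)\<close> with a two-valued function
  avoids integrating against the exponential density.\<close>

lemma nn_integral_exp_neg_E_le: "(\<integral>\<^sup>+\<omega>. ennreal (exp (- E j \<omega>)) \<partial>M) \<le> ennreal (7 / 9)"
proof -
  have "(\<integral>\<^sup>+\<omega>. ennreal (exp (- E j \<omega>)) \<partial>M)
      \<le> (\<integral>\<^sup>+\<omega>. ennreal (exp ((- 1) * indicator {1<..} (E j \<omega>))) \<partial>M)"
    using E_nonneg_AE[of j]
    by (intro nn_integral_mono_AE) (auto intro!: ennreal_leI split: split_indicator elim: AE_mp)
  also have "\<dots> = ennreal (1 + (exp (- 1) - 1) * exp (- 1))"
    using prob_E_greater[of 1 j] by (subst nn_integral_exp_indicator) auto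
  also have "\<dots> \<le> ennreal (7 / 9)"
  proof (intro ennreal_leI)
    define y where "y = exp (- 1 :: real)"
    have y: "1 / 3 \<le> y" "y \<le> 1 / 2"
      using exp_le exp_ge_add_one_self[of "1 :: real"] by (simp_all add: y_def exp_minus divide_simps)
    then have "(y - 1 / 3) * (y - 1 / 2) \<le> 0"
      by (intro mult_nonneg_nonpos) auto
    moreover have "1 + (y - 1) * y = (y - 1 / 3) * (y - 1 / 2) + 5 / 6 - y / 6"
      by (simp add: algebra_simps)
    ultimately have "1 + (y - 1) * y \<le> 7 / 9"
      using y(1) by linarith
    then show "1 + (exp (- 1) - 1) * exp (- 1) \<le> (7 / 9 :: real)"
      by (simp add: y_def)
  qed
  finally show ?thesis .
qed

lemma prob_arrival_sum_less_le: "prob {\<omega>\<in>space M. (\<Sum>j<i. E j \<omega>) < real i / 20} \<le> (140 / 171) ^ i"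
proof -
  let ?S = "\<lambda>\<omega>. \<Sum>j<i. E j \<omega>"
  have "(\<integral>\<^sup>+\<omega>. ennreal (exp (1 * - ?S \<omega>)) \<partial>M) = (\<integral>\<^sup>+\<omega>. (\<Prod>j<i. ennreal (exp (- E j \<omega>))) \<partial>M)"
    by (intro nn_integral_cong) (simp add: exp_sum prod_ennreal sum_negf[symmetric])
  also have "\<dots> = (\<Prod>j<i. \<integral>\<^sup>+\<omega>. ennreal (exp (- E j \<omega>)) \<partial>M)"
    by (rule nn_integral_prod_E) measurable
  also have "\<dots> \<le> (\<Prod>j<i. ennreal (7 / 9))"
    by (intro prod_mono_ennreal nn_integral_exp_neg_E_le)
  also have "\<dots> = ennreal ((7 / 9) ^ i)"
    by (simp add: prod_ennreal ennreal_power)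
  finally have "prob {\<omega>\<in>space M. - (real i / 20) \<le> - ?S \<omega>} \<le> exp (- 1 * - (real i / 20)) * (7 / 9) ^ i"
    by (intro prob_ge_le_exp_mgf) auto
  moreover have "exp (real i / 20) = exp (1 / 20) ^ i"
    by (simp add: exp_of_nat_mult[symmetric])
  moreover have "exp (1 / 20 :: real) \<le> 20 / 19"
    using exp_ge_add_one_self[of "- (1 / 20 :: real)"] by (simp add: exp_minus divide_simps)
  then have "exp (1 / 20) ^ i * (7 / 9) ^ i \<le> (20 / 19) ^ i * ((7 / 9) ^ i :: real)"
    by (intro mult_right_mono power_mono) auto
  ultimately have "prob {\<omega>\<in>space M. - (real i / 20) \<le> - ?S \<omega>} \<le> (140 / 171) ^ i"
    by (simp add: power_mult_distrib[symmetric])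
  moreover have "{\<omega>\<in>space M. ?S \<omega> < real i / 20} \<subseteq> {\<omega>\<in>space M. - (real i / 20) \<le> - ?S \<omega>}"
    by auto
  moreover have "{\<omega>\<in>space M. - (real i / 20) \<le> - ?S \<omega>} \<in> events"
    by measurable
  ultimately show ?thesis
    by (meson finite_measure_mono order_trans)
qed

lemma AE_eventually_arrival_le: "AE \<omega> in M. \<forall>\<^sub>F i in sequentially. E i \<omega> \<le> 2 * ln (real i)"
proof (rule AE_eventually_of_summable_prob[OF _ _ summable_inverse_square])
  show "\<forall>\<^sub>F i in sequentially. prob {\<omega>\<in>space M. \<not> E i \<omega> \<le> 2 * ln (real i)} \<le> 1 / (real i)\<^sup>2"
    using eventually_ge_at_top[of 1] by eventually_elim (simp add: not_le prob_E_greater_2ln)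
qed measurable

lemma AE_eventually_arrival_sum_ge: "AE \<omega> in M. \<forall>\<^sub>F i in sequentially. real i / 20 \<le> (\<Sum>j<i. E j \<omega>)"
proof (rule AE_eventually_of_summable_prob[where b="\<lambda>i. (140 / 171) ^ i"])
  show "\<forall>\<^sub>F i in sequentially. prob {\<omega>\<in>space M. \<not> real i / 20 \<le> (\<Sum>j<i. E j \<omega>)} \<le> (140 / 171) ^ i"
    by (intro always_eventually allI) (use prob_arrival_sum_less_le in \<open>simp add: not_le\<close>)
qed (simp_all add: summable_geometric)

lemma AE_eventually_atom_mass_less_cube:
  "AE \<omega> in M. \<forall>\<^sub>F n in sequentially. atom_mass \<theta> (\<lambda>n. X n \<omega>) {0..real n} < ennreal (real n ^ 3)"
proof (rule AE_eventually_of_summable_prob[OF _ _ summable_inverse_square])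
  show "\<forall>\<^sub>F n in sequentially.
      prob {\<omega>\<in>space M. \<not> atom_mass \<theta> (\<lambda>n. X n \<omega>) {0..real n} < ennreal (real n ^ 3)} \<le> 1 / (real n)\<^sup>2"
    using eventually_ge_at_top[of 1] by eventually_elim (simp add: not_less prob_atom_mass_ge_cube_le)
qed measurable

lemma prob_atom_mass_less_block_mass_bound:
  assumes k: "4000 \<le> k" and \<theta>1: "0 < \<theta> 1"
    and mean: "real k * \<theta> 1 < 1000 * mean_atom_mass \<theta> (exp (real k))"
  shows "prob {\<omega>\<in>space M. atom_mass \<theta> (\<lambda>n. X n \<omega>) {0..exp (real k)} < ennreal (block_mass_bound \<theta> k)}
    \<le> exp (- 1 / 4000) ^ k"
proof -
  define q where "q = mean_atom_mass \<theta> (exp (real k)) / \<theta> 1"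
  have "block_mass_bound \<theta> k / \<theta> 1 = 1000 / real k * q"
    by (simp add: block_mass_bound_def q_def)
  also have "\<dots> \<le> 1 / 4 * q"
    using k \<theta>1 mean_atom_mass_nonneg[of "exp (real k)"]
    by (intro mult_right_mono) (auto simp: q_def field_simps)
  finally have "block_mass_bound \<theta> k / \<theta> 1 - mean_atom_mass \<theta> (exp (real k)) / (2 * \<theta> 1) \<le> - (real k / 4000)"
    using mean \<theta>1 by (simp add: q_def field_simps)
  then have "exp (block_mass_bound \<theta> k / \<theta> 1 - mean_atom_mass \<theta> (exp (real k)) / (2 * \<theta> 1))
      \<le> exp (- 1 / 4000) ^ k"
    by (simp flip: exp_of_nat_mult)
  then show ?thesis
    using \<theta>1 by (intro order_trans[OF prob_atom_mass_less_le_mean]) auto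
qed

lemma prob_atom_mass_window_greater:
  assumes k: "100 \<le> k"
  shows "prob {\<omega>\<in>space M. \<exists>j \<le> window_count \<theta> k.
      ennreal (window_mass k) < atom_mass \<theta> (\<lambda>n. X n \<omega>) (window \<theta> k j)} \<le> 1002 * exp (- 1) ^ k"
proof -
  define w where "w = window_width \<theta> k"
  define m where "m = mean_atom_mass \<theta> (exp (real k))"
  define B where "B j = {\<omega>\<in>space M. ennreal (window_mass k) < atom_mass \<theta> (\<lambda>n. X n \<omega>) (window \<theta> k j)}" for j
  have B [measurable]: "B j \<in> events" for j
    unfolding B_def window_def by measurable
  have w: "0 \<le> w"
    using mean_atom_mass_nonneg[of "exp (real k)"]
    by (simp add: w_def window_width_def block_mass_bound_def)
  have "prob (B j) \<le> exp (- (exp (real k) / 2) * window_mass k + 2 * w * m)" for j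
  proof -
    have "window \<theta> k j = {exp (real k) + real j * w <.. exp (real k) + real j * w + 2 * w}"
      by (simp add: window_def w_def algebra_simps)
    then show ?thesis
      unfolding B_def m_def using w window_mass_nonneg[OF k]
      by (simp only:) (rule prob_atom_mass_window_greater_le; simp)
  qed
  then have "(\<Sum>j\<le>window_count \<theta> k. prob (B j))
      \<le> (real (window_count \<theta> k) + 1) * exp (- (exp (real k) / 2) * window_mass k + 2 * w * m)"
    using sum_mono[of "{..window_count \<theta> k}" "\<lambda>j. prob (B j)"
        "\<lambda>_. exp (- (exp (real k) / 2) * window_mass k + 2 * w * m)"]
    by (simp add: algebra_simps)
  also have "\<dots> \<le> 1002 * exp (2 * real k + 1) * exp (- 3 * real k - 1)"
    using window_count_le[OF k] window_exponent_le[OF k]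
    by (intro mult_mono) (auto simp: w_def m_def)
  also have "\<dots> = 1002 * exp (- 1) ^ k"
    by (simp add: mult.assoc flip: exp_add exp_of_nat_mult)
  finally have "(\<Sum>j\<le>window_count \<theta> k. prob (B j)) \<le> 1002 * exp (- 1) ^ k" .
  moreover have "prob (\<Union>j\<in>{..window_count \<theta> k}. B j) \<le> (\<Sum>j\<le>window_count \<theta> k. prob (B j))"
    using B by (intro finite_measure_subadditive_finite) blast+
  moreover have "(\<Union>j\<in>{..window_count \<theta> k}. B j) = {\<omega>\<in>space M. \<exists>j \<le> window_count \<theta> k.
      ennreal (window_mass k) < atom_mass \<theta> (\<lambda>n. X n \<omega>) (window \<theta> k j)}"
    unfolding B_def by auto
  ultimately show ?thesis by simp
qed

lemma AE_eventually_block_mass_bound_le: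
  "AE \<omega> in M. \<forall>\<^sub>F k in sequentially.
     0 < \<theta> 1 \<longrightarrow> real k * \<theta> 1 < 1000 * mean_atom_mass \<theta> (exp (real k)) \<longrightarrow>
     ennreal (block_mass_bound \<theta> k) \<le> atom_mass \<theta> (\<lambda>n. X n \<omega>) {0..exp (real k)}"
proof (rule AE_eventually_of_summable_prob[where b="\<lambda>k. exp (- 1 / 4000) ^ k"])
  show "\<forall>\<^sub>F k in sequentially. prob {\<omega>\<in>space M. \<not> (0 < \<theta> 1 \<longrightarrow>
      real k * \<theta> 1 < 1000 * mean_atom_mass \<theta> (exp (real k)) \<longrightarrow>
      ennreal (block_mass_bound \<theta> k) \<le> atom_mass \<theta> (\<lambda>n. X n \<omega>) {0..exp (real k)})}
    \<le> exp (- 1 / 4000) ^ k"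
    using eventually_ge_at_top[of 4000]
  proof eventually_elim
    case (elim k)
    show ?case
    proof (cases "0 < \<theta> 1 \<and> real k * \<theta> 1 < 1000 * mean_atom_mass \<theta> (exp (real k))")
      case True
      then show ?thesis
        using prob_atom_mass_less_block_mass_bound[OF elim] by (simp add: not_le)
    next
      case False
      then have empty: "{\<omega>\<in>space M. \<not> (0 < \<theta> 1 \<longrightarrow>
          real k * \<theta> 1 < 1000 * mean_atom_mass \<theta> (exp (real k)) \<longrightarrow>
          ennreal (block_mass_bound \<theta> k) \<le> atom_mass \<theta> (\<lambda>n. X n \<omega>) {0..exp (real k)})} = {}"
        by blast
      show ?thesis unfolding empty by simp
    qed
  qed
  show "{\<omega>\<in>space M. \<not> (0 < \<theta> 1 \<longrightarrow>
      real k * \<theta> 1 < 1000 * mean_atom_mass \<theta> (exp (real k)) \<longrightarrow>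
      ennreal (block_mass_bound \<theta> k) \<le> atom_mass \<theta> (\<lambda>n. X n \<omega>) {0..exp (real k)})} \<in> events" for k
    by measurable
qed (simp add: summable_geometric)

lemma AE_eventually_windows_le:
  "AE \<omega> in M. \<forall>\<^sub>F k in sequentially.
     \<forall>j \<le> window_count \<theta> k. atom_mass \<theta> (\<lambda>n. X n \<omega>) (window \<theta> k j) \<le> ennreal (window_mass k)"
proof (rule AE_eventually_of_summable_prob[where b="\<lambda>k. 1002 * exp (- 1) ^ k"])
  show "\<forall>\<^sub>F k in sequentially. prob {\<omega>\<in>space M. \<not> (\<forall>j \<le> window_count \<theta> k.
      atom_mass \<theta> (\<lambda>n. X n \<omega>) (window \<theta> k j) \<le> ennreal (window_mass k))} \<le> 1002 * exp (- 1) ^ k"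
    using eventually_ge_at_top[of 100]
    by eventually_elim (use prob_atom_mass_window_greater in \<open>simp add: not_le\<close>)
  show "{\<omega>\<in>space M. \<not> (\<forall>j \<le> window_count \<theta> k.
      atom_mass \<theta> (\<lambda>n. X n \<omega>) (window \<theta> k j) \<le> ennreal (window_mass k))} \<in> events" for k
    unfolding window_def by measurable
qed (simp add: summable_geometric)

theorem AE_mu_cuts_gap_le_ln_sq_div:
  "AE \<omega> in M. \<exists>L0\<ge>0. \<forall>l\<ge>L0. \<forall>i.
     cuts \<theta> (\<lambda>n. X n \<omega>) (\<lambda>n. E n \<omega>) i \<ge> l \<longrightarrow>
     mu_Ioc \<theta> (\<lambda>n. X n \<omega>) (cuts \<theta> (\<lambda>n. X n \<omega>) (\<lambda>n. E n \<omega>) i)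
            (cuts \<theta> (\<lambda>n. X n \<omega>) (\<lambda>n. E n \<omega>) (Suc i))
       \<le> ennreal ((ln l)\<^sup>2 / l)"
proof -
  have "AE \<omega> in M. 0 < \<theta> 1 \<longrightarrow> 0 \<le> X 1 \<omega>"
    using X_nonneg_AE[of 1] by (cases "0 < \<theta> 1") auto
  moreover have "AE \<omega> in M. \<forall>j. 0 \<le> E j \<omega>"
    by (simp add: AE_all_countable E_nonneg_AE)
  ultimately show ?thesis
    using AE_eventually_arrival_le AE_eventually_arrival_sum_ge AE_eventually_atom_mass_less_cube
      AE_eventually_block_mass_bound_le AE_eventually_windows_le
  proof eventually_elim
    case (elim \<omega>)
    interpret cut_sequence \<theta> "\<lambda>n. X n \<omega>" "\<lambda>n. E n \<omega>"
      using elim(1,2) by unfold_locales auto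
    show ?case using mu_cuts_gap_le_ln_sq_div[OF elim(3-7)] by simp
  qed
qed

end

theorem mainTheorem12:
  fixes M :: "'a measure" and \<theta> :: "nat \<Rightarrow> real"
    and X :: "nat \<Rightarrow> 'a \<Rightarrow> real" and E :: "nat \<Rightarrow> 'a \<Rightarrow> real"
  assumes "prob_space M"
    and "Omega_param \<theta>"
    and "\<And>i. i \<ge> 1 \<Longrightarrow> 0 < \<theta> i \<Longrightarrow> distributed M lborel (X i) (exponential_density (\<theta> i))"
    and "\<And>i. i \<ge> 1 \<Longrightarrow> X i \<in> borel_measurable M"
    and "\<And>j. distributed M lborel (E j) (exponential_density 1)"
    and "prob_space.indep_vars M (\<lambda>_. borel)
           (\<lambda>k. case k of Inl i \<Rightarrow> X i | Inr j \<Rightarrow> E j) (Inl ` {1..} \<union> Inr ` UNIV)"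
  shows "AE \<omega> in M. \<exists>L0\<ge>0. \<forall>l\<ge>L0. \<forall>i.
           cuts \<theta> (\<lambda>n. X n \<omega>) (\<lambda>n. E n \<omega>) i \<ge> l \<longrightarrow>
           mu_Ioc \<theta> (\<lambda>n. X n \<omega>) (cuts \<theta> (\<lambda>n. X n \<omega>) (\<lambda>n. E n \<omega>) i)
                  (cuts \<theta> (\<lambda>n. X n \<omega>) (\<lambda>n. E n \<omega>) (Suc i))
             \<le> ennreal ((ln l)\<^sup>2 / l)"
proof -
  interpret cut_model M \<theta> X E
    using assms by (simp add: cut_model_def cut_model_axioms_def omega_parameters_def)
  show ?thesis by (rule AE_mu_cuts_gap_le_ln_sq_div)
qed

end
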